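(* Let $0<\iota<1/3$, $s\in(0,1)$, and let $\overline\omega:[0,\infty)\to[0,\infty)$ be continuous, nondecreasing, with $\overline\omega(0)=0$ and $\limsup_{t\to\infty}\overline\omega(t)/t<\infty$, satisfying the Dini condition (respectively the $2s$-Dini condition). Then there exists a continuous, increasing, concave function $\omega:[0,\infty)\to[0,\infty)$ with $\omega\in C^2((0,\infty))$, $\omega(0)=0$, $\omega\ge\overline\omega$, which satisfies the Dini condition (respectively the $2s$-Dini condition), and there exists $t_0>0$ such that $t\mapsto\omega(t)/t^\iota$ is decreasing on $(0,t_0)$ and $$t^2\omega''(t)\ge-\omega(t)-3t\omega'(t)\quad\text{for all }0<t<t_0.$$
   Context: Dini condition: $\int_0^1\omega(t)/t\,dt<\infty$. $2s$-Dini condition ($s\neq1/2$): $\int_0^1\frac{\omega(t)}{t}\frac{\omega(t)^{2s-1}-\omega(1)^{2s-1}}{1-2s}dt<\infty$; for $s=1/2$: $\int_0^1\frac{\omega(t)}{t}\ln\frac{\omega(1)}{\omega(t)}dt<\infty$. *)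

theory Defs
  imports "HOL-Analysis.Analysis"
begin

definition dini :: "(real \<Rightarrow> real) \<Rightarrow> bool" where
  "dini w \<longleftrightarrow> set_integrable lborel {0<..1} (\<lambda>t. w t / t)"

definition two_s_dini :: "real \<Rightarrow> (real \<Rightarrow> real) \<Rightarrow> bool" where
  "two_s_dini s w \<longleftrightarrow>
     (if s = 1/2
      then (set_integrable lborel {0<..1} (\<lambda>t. w t / t * ln (w 1 / w t)))
      else (set_integrable lborel {0<..1}
             (\<lambda>t. w t / t * ((w t powr (2 * s - 1) - w 1 powr (2 * s - 1)) / (1 - 2 * s)))))"

definition admissible_modulus :: "(real \<Rightarrow> real) \<Rightarrow> bool" where
  "admissible_modulus wb \<longleftrightarrow>
     continuous_on {0..} wb \<and> mono_on {0..} wb \<and> wb 0 = 0 \<and> (\<forall>t\<ge>0. wb t \<ge> 0) \<and>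
     Limsup at_top (\<lambda>t. ereal (wb t / t)) < \<infinity>"

definition good_modulus :: "real \<Rightarrow> (real \<Rightarrow> real) \<Rightarrow> (real \<Rightarrow> real) \<Rightarrow> bool" where
  "good_modulus \<iota> wb w \<longleftrightarrow>
     continuous_on {0..} w \<and> strict_mono_on {0..} w \<and> concave_on {0..} w \<and>
     (\<forall>t\<ge>0. w t \<ge> 0) \<and> w 0 = 0 \<and>
     (\<forall>t>0. w differentiable at t) \<and> (\<forall>t>0. deriv w differentiable at t) \<and>
     continuous_on {0<..} (deriv (deriv w)) \<and>
     (\<forall>t\<ge>0. w t \<ge> wb t) \<and>
     (\<exists>t0>0. strict_antimono_on {0<..<t0} (\<lambda>t. w t / t powr \<iota>) \<and>
        (\<forall>t. 0 < t \<and> t < t0 \<longrightarrow>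
            t^2 * deriv (deriv w) t \<ge> - w t - 3 * t * deriv w t))"

end

theory Submission
  imports Defs
begin

text \<open>Truncate the modulus \<open>wb\<close> to \<open>f(u) = wb(min u 1) + min u 1\<close> and put, with \<open>a = \<iota>/2\<close>,
  \<open>T f(t) = t\<^sup>a \<integral>\<^sub>t\<^sup>\<infinity> f(v) v\<^sup>-\<^sup>a\<^sup>-\<^sup>1 dv\<close> and \<open>\<omega>(t) = T f(t) + (1/t) \<integral>\<^sub>0\<^sup>t f + c t\<close>, where \<open>c\<close> bounds
  \<open>wb(t)/t\<close> for \<open>t \<ge> 1\<close>. Then \<open>f \<le> a T f\<close>, so \<open>\<omega>' = (a T f - (1/t)\<integral>\<^sub>0\<^sup>t f)/t + c\<close> is positive and,
  as \<open>a < 1\<close>, decreasing; \<open>T f(t) \<ge> t\<^sup>a/a\<close> dominates \<open>c t\<close> near \<open>0\<close>, which makes \<open>\<omega>/t\<^sup>\<iota>\<close>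
  decrease; the differential inequality is algebra in \<open>T f\<close>, the average and \<open>f\<close>.
  Each Dini-type condition on a modulus \<open>g\<close> is (or is controlled by) finiteness of
  \<open>\<integral>\<^sub>0\<^sup>1 \<Phi>(g(t)) dt/t\<close> for a gauge \<open>\<Phi>\<close> that is increasing, sublinear and grows at least
  like a power: \<open>\<Phi>(x) = x\<close>, \<open>x\<^sup>2\<^sup>s\<close> or \<open>x (1 + ln\<^sup>+(M/x))\<close>. Such conditions pass from \<open>f\<close> to \<open>T f\<close> by Hardy's inequality and
  the growth of \<open>\<Phi>\<close>, and trivially to the other two summands.\<close>

lemma has_integral_powr_Icc:
  fixes x y e :: real
  assumes "0 < x" "x \<le> y" "e \<noteq> 0"
  shows "((\<lambda>v. v powr (e - 1)) has_integral ((y powr e - x powr e) / e)) {x..y}"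
proof -
  have "((\<lambda>v. v powr (e - 1)) has_integral (y powr e / e - x powr e / e)) {x..y}"
  proof (rule fundamental_theorem_of_calculus)
    fix v assume "v \<in> {x..y}"
    then have "((\<lambda>v. v powr e / e) has_real_derivative v powr (e - 1)) (at v)"
      using assms by (auto intro!: derivative_eq_intros)
    then show "((\<lambda>v. v powr e / e) has_vector_derivative v powr (e - 1)) (at v within {x..y})"
      by (simp add: has_real_derivative_iff_has_vector_derivative[symmetric] has_field_derivative_at_within)
  qed (use assms in simp)
  then show ?thesis by (simp add: diff_divide_distrib)
qed

lemma set_integrable_if_nonneg_integrable_on:
  fixes h :: "real \<Rightarrow> real"
  assumes "h integrable_on S" "\<And>t. t \<in> S \<Longrightarrow> 0 \<le> h t" "S \<in> sets borel" "continuous_on S h"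
  shows "set_integrable lborel S h"
proof -
  have "set_integrable lebesgue S h"
    using nonnegative_absolutely_integrable_1[OF assms(1)] assms(2) by blast
  moreover have "(\<lambda>x. indicator S x *\<^sub>R h x) \<in> borel_measurable lborel"
    using borel_measurable_continuous_on_indicator[OF assms(3,4)] by simp
  ultimately show ?thesis
    unfolding set_integrable_def using integrable_completion by blast
qed

text \<open>Monotone convergence along the intervals \<open>[1/(k+1), 1]\<close>.\<close>

lemma set_integrable_Ioc01_if_integrals_bounded:
  fixes h :: "real \<Rightarrow> real"
  assumes cont: "continuous_on {0<..1} h" and nn: "\<And>t. t \<in> {0<..1} \<Longrightarrow> 0 \<le> h t"
    and bnd: "\<And>e. 0 < e \<Longrightarrow> e \<le> 1 \<Longrightarrow> integral {e..1} h \<le> B"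
  shows "set_integrable lborel {0<..1::real} h"
proof -
  define F where "F k x = (if x \<in> {1/Suc k..1} then h x else 0)" for k :: nat and x :: real
  have sub: "{1/Suc k..1} \<subseteq> {0<..1::real}" for k
  proof
    fix x assume x: "x \<in> {1/Suc k..1::real}"
    have "0 < 1 / real (Suc k)" by simp
    also have "\<dots> \<le> x" using x by simp
    finally show "x \<in> {0<..1}" using x by simp
  qed
  have int: "h integrable_on {1/Suc k..1}" for k
    by (rule integrable_continuous_interval, rule continuous_on_subset[OF cont sub])
  have Fint: "F k integrable_on {0<..1}" and Fval: "integral {0<..1} (F k) = integral {1/Suc k..1} h" for k
    unfolding F_def integrable_restrict_Int integral_restrict_Int using int[of k] sub[of k]
    by (simp_all add: Int_absorb2)
  have mono: "F k x \<le> F (Suc k) x" if "x \<in> {0<..1}" for k x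
  proof -
    have "1 / real (Suc (Suc k)) \<le> 1 / real (Suc k)" by (simp add: frac_le)
    then show ?thesis using that nn[of x] unfolding F_def by auto
  qed
  have lim: "((\<lambda>k. F k x) \<longlongrightarrow> h x) sequentially" if x: "x \<in> {0<..1}" for x
  proof (rule tendsto_eventually)
    obtain N :: nat where N: "1 / x < N" using reals_Archimedean2 by blast
    have "F k x = h x" if "k \<ge> N" for k
    proof -
      have "1 / x < Suc k" using N that by linarith
      then have "1 / real (Suc k) \<le> x" using x by (simp add: field_simps)
      then show ?thesis using x unfolding F_def by auto
    qed
    then show "\<forall>\<^sub>F k in sequentially. F k x = h x"
      unfolding eventually_sequentially by blast
  qed
  have "\<bar>integral {0<..1} (F k)\<bar> \<le> \<bar>B\<bar>" for k
  proof -
    have "0 \<le> integral {1/Suc k..1} h"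
      using nn sub[of k] by (intro integral_nonneg int) auto
    moreover have "integral {1/Suc k..1} h \<le> B"
      by (rule bnd) (auto simp: field_simps)
    ultimately show ?thesis using Fval[of k] by linarith
  qed
  then have "bounded (range (\<lambda>k. integral {0<..1} (F k)))"
    unfolding bounded_iff by (auto simp: real_norm_def)
  then have "h integrable_on {0<..1}"
    using monotone_convergence_increasing[OF Fint mono lim] by blast
  then show ?thesis
    by (rule set_integrable_if_nonneg_integrable_on) (use nn cont in auto)
qed

lemma set_integrable_Ioc01_powr:
  fixes r :: real assumes "r > 0"
  shows "set_integrable lborel {0<..1::real} (\<lambda>t. t powr (r - 1))"
proof (rule set_integrable_Ioc01_if_integrals_bounded[where B = "1/r"])
  show "continuous_on {0<..1::real} (\<lambda>t. t powr (r - 1))"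
    by (intro continuous_intros) auto
  fix e :: real assume e: "0 < e" "e \<le> 1"
  have "integral {e..1} (\<lambda>t. t powr (r - 1)) = (1 - e powr r) / r"
    using has_integral_powr_Icc[OF e, of r] assms by (simp add: integral_unique)
  also have "\<dots> \<le> 1 / r" using assms e by (simp add: divide_right_mono)
  finally show "integral {e..1} (\<lambda>t. t powr (r - 1)) \<le> 1 / r" .
qed simp

lemma set_integrable_Ioc01_const: "set_integrable lborel {0<..1::real} (\<lambda>_. C :: real)"
proof (rule set_integrable_subset)
  show "set_integrable lborel {0..1::real} (\<lambda>_. C)"
    unfolding set_integrable_def by (rule borel_integrable_compact) auto
qed auto

lemma set_integrable_Ioc01_bound:
  fixes g h :: "real \<Rightarrow> real"
  assumes "continuous_on {0<..1} g" "set_integrable lborel {0<..1} h"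
    and "\<And>t. 0 < t \<Longrightarrow> t \<le> 1 \<Longrightarrow> \<bar>g t\<bar> \<le> h t"
  shows "set_integrable lborel {0<..1} g"
proof (rule set_integrable_bound[OF assms(2)])
  show "set_borel_measurable lborel {0<..1} g"
    unfolding set_borel_measurable_def measurable_lborel2
    by (intro borel_measurable_continuous_on_indicator assms(1)) auto
  show "AE x in lborel. x \<in> {0<..1} \<longrightarrow> norm (g x) \<le> norm (h x)"
    using assms(3) by (intro AE_I2) force
qed

section \<open>The tail transform\<close>

definition tail_kernel :: "(real \<Rightarrow> real) \<Rightarrow> real \<Rightarrow> real \<Rightarrow> real" where
  "tail_kernel g b v = g v * v powr (-b-1)"

definition kernel_integral :: "(real \<Rightarrow> real) \<Rightarrow> real \<Rightarrow> real \<Rightarrow> real" where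
  "kernel_integral g b t = integral {t..1} (tail_kernel g b) - integral {1..t} (tail_kernel g b)"

text \<open>For \<open>g\<close> constant on \<open>[1,\<infinity>)\<close> this is \<open>t\<^sup>b \<integral>\<^sub>t\<^sup>\<infinity> g(v) v\<^sup>-\<^sup>b\<^sup>-\<^sup>1 dv\<close>: the summand
  \<open>g 1 / b\<close> is the integral over \<open>[1,\<infinity>)\<close>, and \<open>kernel_integral\<close> is the oriented integral
  from \<open>t\<close> to \<open>1\<close>.\<close>

definition tail_transform :: "(real \<Rightarrow> real) \<Rightarrow> real \<Rightarrow> real \<Rightarrow> real" where
  "tail_transform g b t = t powr b * (g 1 / b + kernel_integral g b t)"

definition average :: "(real \<Rightarrow> real) \<Rightarrow> real \<Rightarrow> real" where
  "average g t = integral {0..t} g / t"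

locale truncated_modulus =
  fixes g :: "real \<Rightarrow> real" and b :: real
  assumes cont: "continuous_on {0..} g"
    and mono: "\<And>x y. 0 \<le> x \<Longrightarrow> x \<le> y \<Longrightarrow> g x \<le> g y"
    and nonneg: "\<And>x. 0 \<le> x \<Longrightarrow> 0 \<le> g x"
    and const_ge_1: "\<And>x. 1 \<le> x \<Longrightarrow> g x = g 1"
    and exponent_pos: "0 < b"
begin

abbreviation "T \<equiv> tail_transform g b"

lemma continuous_on_tail_kernel: "continuous_on {0<..} (tail_kernel g b)"
  unfolding tail_kernel_def
  by (intro continuous_intros continuous_on_subset[OF cont]) auto

lemma integrable_tail_kernel: "0 < x \<Longrightarrow> tail_kernel g b integrable_on {x..y}"
  by (rule integrable_continuous_interval, rule continuous_on_subset[OF continuous_on_tail_kernel]) auto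

lemma tail_kernel_nonneg: "0 < v \<Longrightarrow> 0 \<le> tail_kernel g b v"
  unfolding tail_kernel_def using nonneg[of v] by simp

lemma integral_const_times_kernel:
  assumes "0 < x" "x \<le> y"
  shows "integral {x..y} (\<lambda>v. C * v powr (-b-1)) = C * ((x powr (-b) - y powr (-b)) / b)"
proof -
  have e: "(y powr (-b) - x powr (-b)) / (-b) = (x powr (-b) - y powr (-b)) / b"
    by (metis minus_diff_eq minus_divide_left minus_divide_right)
  have "((\<lambda>v. v powr ((-b) - 1)) has_integral (y powr (-b) - x powr (-b)) / (-b)) {x..y}"
    using has_integral_powr_Icc[OF assms, of "-b"] exponent_pos by simp
  then have "((\<lambda>v. v powr (-b - 1)) has_integral (x powr (-b) - y powr (-b)) / b) {x..y}"
    unfolding e by simp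
  then have "((\<lambda>v. C * v powr (-b - 1)) has_integral C * ((x powr (-b) - y powr (-b)) / b)) {x..y}"
    by (rule has_integral_mult_right)
  then show ?thesis by (rule integral_unique)
qed

lemma kernel_integral_eq:
  assumes "0 < e" "e \<le> 1" "e \<le> x"
  shows "kernel_integral g b x = integral {e..1} (tail_kernel g b) - integral {e..x} (tail_kernel g b)"
proof (cases "x \<le> 1")
  case True
  have "integral {e..x} (tail_kernel g b) + integral {x..1} (tail_kernel g b) = integral {e..1} (tail_kernel g b)"
    by (rule Henstock_Kurzweil_Integration.integral_combine) (use assms True integrable_tail_kernel in auto)
  moreover have "integral {1..x} (tail_kernel g b) = 0"
    using True by (cases "x = 1") auto
  ultimately show ?thesis unfolding kernel_integral_def by linarith
next
  case False
  have "integral {e..1} (tail_kernel g b) + integral {1..x} (tail_kernel g b) = integral {e..x} (tail_kernel g b)"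
    by (rule Henstock_Kurzweil_Integration.integral_combine) (use assms False integrable_tail_kernel in auto)
  then show ?thesis using False unfolding kernel_integral_def by simp
qed

lemma kernel_integral_has_derivative:
  assumes t: "0 < t"
  shows "(kernel_integral g b has_real_derivative - tail_kernel g b t) (at t)"
proof -
  define e where "e = min (t/2) 1"
  have e: "0 < e" "e \<le> 1" "e < t" using t by (auto simp: e_def)
  have "((\<lambda>x. integral {e..x} (tail_kernel g b)) has_real_derivative tail_kernel g b t) (at t within {e..t+1})"
    by (rule integral_has_real_derivative, rule continuous_on_subset[OF continuous_on_tail_kernel]) (use e in auto)
  moreover have "at t within {e..t+1} = at t" using e by (intro at_within_Icc_at) auto
  ultimately have d: "((\<lambda>x. integral {e..1} (tail_kernel g b) - integral {e..x} (tail_kernel g b))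
      has_real_derivative - tail_kernel g b t) (at t)"
    using DERIV_diff[OF DERIV_const] by fastforce
  have ev: "\<forall>\<^sub>F x in nhds t. kernel_integral g b x
      = integral {e..1} (tail_kernel g b) - integral {e..x} (tail_kernel g b)"
    using eventually_nhds_in_open[of "{e<..}" t] e by (auto elim!: eventually_mono intro!: kernel_integral_eq)
  show ?thesis
    using DERIV_cong_ev[OF refl ev refl] d by blast
qed

lemma kernel_integral_antimono:
  assumes "0 < x" "x \<le> y" shows "kernel_integral g b y \<le> kernel_integral g b x"
proof (rule DERIV_nonpos_imp_nonincreasing[OF assms(2)])
  fix z assume "x \<le> z"
  then have "0 < z" using assms by simp
  then show "\<exists>d. (kernel_integral g b has_real_derivative d) (at z) \<and> d \<le> 0"
    using kernel_integral_has_derivative tail_kernel_nonneg by fastforce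
qed

lemma tail_transform_has_derivative:
  assumes t: "0 < t"
  shows "(T has_real_derivative (b * T t - g t) / t) (at t)"
proof -
  have "(T has_real_derivative
      b * t powr (b - 1) * (g 1 / b + kernel_integral g b t) - tail_kernel g b t * t powr b) (at t)"
    unfolding tail_transform_def[abs_def] using t
    by (auto intro!: derivative_eq_intros kernel_integral_has_derivative)
  moreover have "t powr (b - 1) = t powr b / t" "t powr (-b-1) * t powr b = 1 / t"
    using t by (simp_all add: powr_diff powr_add[symmetric] powr_minus_divide)
  ultimately show ?thesis
    by (simp add: tail_transform_def tail_kernel_def diff_divide_distrib mult.assoc)
qed

lemma continuous_on_tail_transform: "continuous_on {0<..} T"
  by (metis DERIV_isCont tail_transform_has_derivative continuous_at_imp_continuous_on greaterThan_iff)

lemma tail_transform_ge_1: assumes "1 \<le> t" shows "T t = g 1 / b"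
proof -
  have "integral {1..t} (tail_kernel g b) = integral {1..t} (\<lambda>v. g 1 * v powr (-b-1))"
    by (rule integral_cong) (auto simp: tail_kernel_def dest: const_ge_1)
  also have "\<dots> = g 1 * ((1 - t powr (-b)) / b)"
    using integral_const_times_kernel[of 1 t "g 1"] assms by simp
  finally have "kernel_integral g b t = - (g 1 * ((1 - t powr (-b)) / b))"
    unfolding kernel_integral_def using assms by (cases "t = 1") auto
  then have "T t = t powr b * (g 1 * t powr (-b) / b)"
    unfolding tail_transform_def by (simp add: diff_divide_distrib right_diff_distrib)
  also have "\<dots> = g 1 / b" using assms by (simp add: powr_minus)
  finally show ?thesis .
qed

lemma tail_transform_le_1: assumes "0 < t" "t \<le> 1"
  shows "T t = t powr b * (g 1 / b + integral {t..1} (tail_kernel g b))"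
  using assms unfolding tail_transform_def kernel_integral_def by (cases "t = 1") auto

lemma tail_transform_lower: assumes t: "0 < t" shows "g t / b \<le> T t"
proof (cases "1 \<le> t")
  case True then show ?thesis using tail_transform_ge_1[OF True] const_ge_1[OF True] by simp
next
  case False
  have "integral {t..1} (\<lambda>v. g t * v powr (-b-1)) \<le> integral {t..1} (tail_kernel g b)"
    using t by (intro integral_le integrable_tail_kernel integrable_continuous_interval continuous_intros)
      (auto simp: tail_kernel_def intro!: mult_right_mono mono)
  then have "g t * ((t powr (-b) - 1) / b) \<le> integral {t..1} (tail_kernel g b)"
    using integral_const_times_kernel[of t 1 "g t"] t False by simp
  then have "t powr b * (g 1 / b + g t * ((t powr (-b) - 1) / b)) \<le> T t"
    using tail_transform_le_1[of t] False t by (simp add: mult_left_mono)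
  moreover have "t powr b * (g 1 / b + g t * ((t powr (-b) - 1) / b)) = t powr b * (g 1 - g t) / b + g t / b"
    using t exponent_pos by (simp add: powr_minus_divide field_simps)
  moreover have "0 \<le> t powr b * (g 1 - g t) / b"
    using mono[of t 1] False t exponent_pos by simp
  ultimately show ?thesis by linarith
qed

lemma tail_transform_nonneg: "0 < t \<Longrightarrow> 0 \<le> T t"
  using tail_transform_lower[of t] nonneg[of t] exponent_pos by (smt (verit) divide_nonneg_pos)

lemma tail_transform_growth:
  assumes "0 < t" "t \<le> u" shows "T u \<le> (u / t) powr b * T t"
proof -
  have "T u \<le> u powr b * (g 1 / b + kernel_integral g b t)"
    unfolding tail_transform_def using kernel_integral_antimono assms by (intro mult_left_mono) auto
  also have "\<dots> = (u / t) powr b * T t"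
    unfolding tail_transform_def using assms by (simp add: powr_divide)
  finally show ?thesis .
qed

lemma integral_tail_kernel_le_powr:
  assumes t: "0 < t" "t \<le> 1" and r: "r < b"
    and bound: "\<And>u. t \<le> u \<Longrightarrow> u \<le> 1 \<Longrightarrow> g u \<le> C * u powr r"
  shows "integral {t..1} (tail_kernel g b) \<le> C * ((t powr (r - b) - 1) / (b - r))"
proof -
  have "integral {t..1} (tail_kernel g b) \<le> integral {t..1} (\<lambda>v. C * v powr ((r - b) - 1))"
  proof (rule integral_le)
    show "(\<lambda>v. C * v powr ((r - b) - 1)) integrable_on {t..1}"
      by (rule integrable_continuous_interval) (use t in \<open>auto intro!: continuous_intros\<close>)
    fix v assume v: "v \<in> {t..1}"
    have "tail_kernel g b v \<le> C * v powr r * v powr (-b-1)"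
      unfolding tail_kernel_def using bound[of v] v by (intro mult_right_mono) auto
    also have "\<dots> = C * v powr ((r - b) - 1)"
      by (simp add: mult.assoc powr_add[symmetric]) (simp add: algebra_simps)
    finally show "tail_kernel g b v \<le> C * v powr ((r - b) - 1)" .
  qed (use integrable_tail_kernel t in simp)
  also have "\<dots> = C * ((1 - t powr (r - b)) / (r - b))"
    using has_integral_powr_Icc[OF t, of "r - b"] r by (intro integral_unique has_integral_mult_right) simp
  also have "(1 - t powr (r - b)) / (r - b) = (t powr (r - b) - 1) / (b - r)"
    by (metis minus_diff_eq minus_divide_divide)
  finally show ?thesis .
qed

lemma tail_transform_upper:
  assumes t: "0 < t" "t \<le> 1" and r: "0 \<le> r" "r < b" and z: "0 \<le> z"
    and hyp: "\<And>u. t \<le> u \<Longrightarrow> u \<le> 1 \<Longrightarrow> g u \<le> z * (u / t) powr r"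
  shows "T t \<le> z / (b - r)"
proof -
  define C where "C = z * t powr (-r)"
  have gu: "g u \<le> C * u powr r" if "t \<le> u" "u \<le> 1" for u
    using hyp[OF that] t that by (simp add: C_def powr_divide powr_minus_divide mult_ac)
  have "T t \<le> t powr b * (C / b + C * ((t powr (r - b) - 1) / (b - r)))"
    unfolding tail_transform_le_1[OF t]
    using integral_tail_kernel_le_powr[OF t r(2) gu] gu[of 1] t exponent_pos
    by (intro mult_left_mono add_mono divide_right_mono) auto
  also have "\<dots> = z * (t powr (b - r) / b + (1 - t powr (b - r)) / (b - r))"
  proof -
    have tC: "t powr b * C = z * t powr (b - r)"
      unfolding C_def by (simp add: powr_add[symmetric] mult_ac)
    have "t powr (b - r) * t powr (r - b) = 1"
      using t by (simp add: powr_add[symmetric])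
    then have tCt: "t powr b * C * t powr (r - b) = z" unfolding tC by (simp add: mult.assoc)
    have "t powr b * (C / b + C * ((t powr (r - b) - 1) / (b - r)))
       = (t powr b * C) / b + ((t powr b * C * t powr (r - b)) - t powr b * C) / (b - r)"
      by (simp add: algebra_simps diff_divide_distrib)
    also have "\<dots> = z * t powr (b - r) / b + (z - z * t powr (b - r)) / (b - r)"
      unfolding tCt by (simp only: tC)
    finally show ?thesis by (simp add: algebra_simps diff_divide_distrib)
  qed
  also have "\<dots> \<le> z * (t powr (b - r) / (b - r) + (1 - t powr (b - r)) / (b - r))"
    using r z exponent_pos by (intro mult_left_mono add_right_mono divide_left_mono) auto
  also have "\<dots> = z / (b - r)" by (simp add: add_divide_distrib[symmetric])
  finally show ?thesis .
qed

lemma tail_transform_le_split: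
  assumes "0 < t" "t \<le> \<delta>" "\<delta> \<le> 1"
  shows "T t \<le> t powr b * (g 1 / b + integral {\<delta>..1} (tail_kernel g b)) + g \<delta> / b"
proof -
  have "integral {t..\<delta>} (tail_kernel g b) \<le> integral {t..\<delta>} (\<lambda>v. g \<delta> * v powr (-b-1))"
    using assms by (intro integral_le integrable_tail_kernel integrable_continuous_interval continuous_intros)
      (auto simp: tail_kernel_def intro!: mult_right_mono mono)
  also have "\<dots> = g \<delta> * ((t powr (-b) - \<delta> powr (-b)) / b)"
    using integral_const_times_kernel[of t \<delta> "g \<delta>"] assms by simp
  also have "\<dots> \<le> g \<delta> * (t powr (-b) / b)"
    using nonneg[of \<delta>] assms exponent_pos by (intro mult_left_mono divide_right_mono) auto
  finally have "t powr b * integral {t..\<delta>} (tail_kernel g b) \<le> t powr b * (g \<delta> * (t powr (-b) / b))"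
    by (rule mult_left_mono) simp
  also have "\<dots> = g \<delta> / b * (t powr b * t powr (-b))" by simp
  also have "t powr b * t powr (-b) = 1" using assms by (simp add: powr_add[symmetric])
  finally have near: "t powr b * integral {t..\<delta>} (tail_kernel g b) \<le> g \<delta> / b" by simp
  have split: "integral {t..\<delta>} (tail_kernel g b) + integral {\<delta>..1} (tail_kernel g b)
      = integral {t..1} (tail_kernel g b)"
    by (rule Henstock_Kurzweil_Integration.integral_combine) (use assms integrable_tail_kernel in auto)
  have "T t = t powr b * (g 1 / b + integral {\<delta>..1} (tail_kernel g b))
      + t powr b * integral {t..\<delta>} (tail_kernel g b)"
    using assms by (simp add: tail_transform_le_1 algebra_simps flip: split)
  then show ?thesis using near by linarith
qed

lemma tail_transform_tendsto_0:
  assumes g0: "g 0 = 0"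
  shows "(T \<longlongrightarrow> 0) (at_right 0)"
proof (rule order_tendstoI)
  fix y :: real assume "y < 0"
  have "\<forall>\<^sub>F x in at_right 0. (0::real) < x" by (rule eventually_at_right_less)
  then show "\<forall>\<^sub>F x in at_right 0. y < T x"
    by (rule eventually_mono) (use tail_transform_nonneg \<open>y < 0\<close> in force)
next
  fix \<epsilon> :: real assume \<epsilon>: "0 < \<epsilon>"
  have "(g \<longlongrightarrow> g 0) (at 0 within {0..})"
    using cont by (simp add: continuous_on_def)
  then have "(g \<longlongrightarrow> 0) (at_right 0)"
    using g0 by (simp add: at_within_Ici_at_right)
  then have "\<forall>\<^sub>F x in at_right 0. g x < b * \<epsilon> / 2"
    using \<epsilon> exponent_pos by (intro order_tendstoD) auto
  then obtain d where d: "0 < d" "\<And>x. 0 < x \<Longrightarrow> x < d \<Longrightarrow> g x < b * \<epsilon> / 2"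
    unfolding eventually_at_right_field by auto
  define \<delta> where "\<delta> = min (d / 2) 1"
  have \<delta>: "0 < \<delta>" "\<delta> \<le> 1" "g \<delta> < b * \<epsilon> / 2"
    using d by (auto simp: \<delta>_def)
  define C where "C = g 1 / b + integral {\<delta>..1} (tail_kernel g b)"
  have "((\<lambda>x. x powr b * C) \<longlongrightarrow> 0 powr b * C) (at_right 0)"
    using exponent_pos by (intro tendsto_intros) (auto intro: eventually_mono[OF eventually_at_right_less])
  then have "\<forall>\<^sub>F x in at_right 0. x powr b * C < \<epsilon> / 2"
    using exponent_pos \<epsilon> by (intro order_tendstoD) auto
  moreover have "\<forall>\<^sub>F x in at_right 0. 0 < x \<and> x < \<delta>"
    using \<delta> by (auto simp: eventually_at_right_field intro!: exI[of _ \<delta>])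
  ultimately show "\<forall>\<^sub>F x in at_right 0. T x < \<epsilon>"
  proof eventually_elim
    case (elim t)
    have "g \<delta> / b < \<epsilon> / 2" using \<delta> exponent_pos by (simp add: pos_divide_less_eq mult.commute)
    then show ?case using tail_transform_le_split[of t \<delta>] elim \<delta> unfolding C_def by linarith
  qed
qed

lemma integral_tail_transform_divide:
  assumes e: "0 < e" "e \<le> 1"
  shows "integral {e..1} (\<lambda>t. T t / t) = (T 1 - T e) / b + integral {e..1} (\<lambda>t. g t / t) / b"
proof -
  have "(\<lambda>t. g t / t) integrable_on {e..1}"
    using e by (intro integrable_continuous_interval continuous_intros continuous_on_subset[OF cont]) auto
  moreover have "((\<lambda>t. (b * T t - g t) / t) has_integral (T 1 - T e)) {e..1}"
  proof (rule fundamental_theorem_of_calculus)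
    fix x assume "x \<in> {e..1}"
    then show "(T has_vector_derivative (b * T x - g x) / x) (at x within {e..1})"
      using tail_transform_has_derivative[of x] e
      by (simp add: has_real_derivative_iff_has_vector_derivative[symmetric] has_field_derivative_at_within)
  qed (use e in simp)
  ultimately have "((\<lambda>t. (1 / b) * ((b * T t - g t) / t) + (1 / b) * (g t / t)) has_integral
      (1 / b) * (T 1 - T e) + (1 / b) * integral {e..1} (\<lambda>t. g t / t)) {e..1}"
    by (intro has_integral_add has_integral_mult_right integrable_integral)
  moreover have "(\<lambda>t. (1 / b) * ((b * T t - g t) / t) + (1 / b) * (g t / t)) = (\<lambda>t. T t / t)"
    using exponent_pos by (auto simp: diff_divide_distrib)
  ultimately show ?thesis by (simp add: integral_unique)
qed

lemma hardy_inequality: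
  assumes int: "set_integrable lborel {0<..1} (\<lambda>t. g t / t)"
  shows "set_integrable lborel {0<..1} (\<lambda>t. T t / t)"
proof -
  define L where "L = integral {0<..1} (\<lambda>t. g t / t)"
  have integrable_HK: "(\<lambda>t. g t / t) integrable_on {0<..1}"
    using set_borel_integral_eq_integral(1)[OF int] .
  show ?thesis
  proof (rule set_integrable_Ioc01_if_integrals_bounded[where B = "(g 1 / b + L) / b"])
    show "continuous_on {0<..1} (\<lambda>t. T t / t)"
      by (intro continuous_intros continuous_on_subset[OF continuous_on_tail_transform]) auto
    show "0 \<le> T t / t" if "t \<in> {0<..1}" for t
      using tail_transform_nonneg[of t] that by simp
    fix e :: real assume e: "0 < e" "e \<le> 1"
    have "T 1 - T e \<le> g 1 / b" using tail_transform_ge_1[of 1] tail_transform_nonneg[of e] e by simp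
    moreover have "integral {e..1} (\<lambda>t. g t / t) \<le> L"
      unfolding L_def
    proof (rule integral_subset_le[OF _ _ integrable_HK])
      show "(\<lambda>t. g t / t) integrable_on {e..1}"
        by (rule integrable_on_subinterval[OF integrable_HK]) (use e in auto)
      show "\<forall>x\<in>{0<..1}. 0 \<le> g x / x" using nonneg by simp
    qed (use e in auto)
    ultimately have "(T 1 - T e) / b + integral {e..1} (\<lambda>t. g t / t) / b \<le> (g 1 / b) / b + L / b"
      using exponent_pos by (intro add_mono divide_right_mono) auto
    then show "integral {e..1} (\<lambda>t. T t / t) \<le> (g 1 / b + L) / b"
      unfolding integral_tail_transform_divide[OF e] by (simp add: add_divide_distrib)
  qed
qed

lemma integrable_on_Icc_0: "g integrable_on {0..t}"
  by (rule integrable_continuous_interval, rule continuous_on_subset[OF cont]) auto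

lemma average_has_derivative:
  assumes t: "0 < t"
  shows "(average g has_real_derivative (g t - average g t) / t) (at t)"
proof -
  have "((\<lambda>x. integral {0..x} g) has_real_derivative g t) (at t within {0..t+1})"
    by (rule integral_has_real_derivative, rule continuous_on_subset[OF cont]) (use t in auto)
  moreover have "at t within {0..t+1} = at t" using t by (intro at_within_Icc_at) auto
  ultimately have d: "((\<lambda>x. integral {0..x} g) has_real_derivative g t) (at t)" by simp
  have "(average g has_real_derivative (g t * t - integral {0..t} g * 1) / (t * t)) (at t)"
    unfolding average_def[abs_def] using DERIV_divide[OF d DERIV_ident] t by simp
  then show ?thesis
    using t by (simp add: average_def diff_divide_distrib)
qed

lemma average_nonneg: "0 < t \<Longrightarrow> 0 \<le> average g t"
  unfolding average_def using nonneg by (intro divide_nonneg_pos integral_nonneg integrable_on_Icc_0) auto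

lemma average_le: assumes t: "0 < t" shows "average g t \<le> g t"
proof -
  have "integral {0..t} g \<le> integral {0..t} (\<lambda>_. g t)"
    by (rule integral_le[OF integrable_on_Icc_0]) (use mono t in auto)
  then show ?thesis unfolding average_def using t by (simp add: pos_divide_le_eq mult.commute)
qed

lemma continuous_on_average: "continuous_on {0<..} (average g)"
  by (metis DERIV_isCont average_has_derivative continuous_at_imp_continuous_on greaterThan_iff)

end

section \<open>Gauges for Dini-type conditions\<close>

locale dini_gauge =
  fixes \<Phi> :: "real \<Rightarrow> real" and c q :: real
  assumes cont: "continuous_on {0..} \<Phi>"
    and mono: "\<And>x y. 0 \<le> x \<Longrightarrow> x \<le> y \<Longrightarrow> \<Phi> x \<le> \<Phi> y"
    and zero: "\<Phi> 0 = 0"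
    and scale_upper: "\<And>l x. 1 \<le> l \<Longrightarrow> 0 \<le> x \<Longrightarrow> \<Phi> (l * x) \<le> l * \<Phi> x"
    and scale_lower: "\<And>l x. 1 \<le> l \<Longrightarrow> 0 \<le> x \<Longrightarrow> c * l powr q * \<Phi> x \<le> \<Phi> (l * x)"
    and const_pos: "0 < c" and exponent_pos: "0 < q"
begin

lemma nonneg: "0 \<le> x \<Longrightarrow> 0 \<le> \<Phi> x"
  using mono[of 0 x] zero by simp

lemma add_le: assumes "0 \<le> x" "0 \<le> y" shows "\<Phi> (x + y) \<le> 2 * (\<Phi> x + \<Phi> y)"
proof -
  have "\<Phi> (x + y) \<le> \<Phi> (2 * max x y)" using assms by (intro mono) auto
  also have "\<dots> \<le> 2 * \<Phi> (max x y)" using assms by (intro scale_upper) auto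
  also have "\<Phi> (max x y) \<le> \<Phi> x + \<Phi> y"
    using nonneg[OF assms(1)] nonneg[OF assms(2)] by (cases "x \<le> y") (auto simp: max_def)
  finally show ?thesis by simp
qed

lemma truncated_modulus_comp:
  assumes "truncated_modulus f a" "0 < b"
  shows "truncated_modulus (\<lambda>t. \<Phi> (f t)) b"
proof -
  interpret f: truncated_modulus f a by fact
  show ?thesis
  proof
    show "continuous_on {0..} (\<lambda>t. \<Phi> (f t))"
      by (rule continuous_on_compose2[OF cont f.cont]) (use f.nonneg in auto)
    show "\<Phi> (f x) \<le> \<Phi> (f y)" if "0 \<le> x" "x \<le> y" for x y
      using that by (intro mono f.nonneg f.mono) auto
    show "0 \<le> \<Phi> (f x)" if "0 \<le> x" for x
      using that by (intro nonneg f.nonneg)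
    show "\<Phi> (f x) = \<Phi> (f 1)" if "1 \<le> x" for x
      using f.const_ge_1[OF that] by simp
  qed fact
qed

lemma continuous_on_comp_divide:
  assumes "continuous_on {0<..1} h" "\<And>t. 0 < t \<Longrightarrow> t \<le> 1 \<Longrightarrow> 0 \<le> h t"
  shows "continuous_on {0<..1} (\<lambda>t. \<Phi> (h t) / t)"
proof -
  have "continuous_on {0<..1} (\<lambda>t. \<Phi> (h t))"
    by (rule continuous_on_compose2[OF cont assms(1)]) (use assms(2) in auto)
  then show ?thesis by (intro continuous_intros) auto
qed

text \<open>Combine the lower growth of \<open>\<Phi>\<close> with \<open>\<Phi>(f u) \<le> b K(u) \<le> b (u/t)\<^sup>b K(t)\<close>, where \<open>K\<close>
  is the tail transform of \<open>\<Phi> \<circ> f\<close>.\<close>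

lemma le_powr_if_tail_transform_comp_less:
  assumes K: "truncated_modulus (\<lambda>t. \<Phi> (f t)) b"
    and r: "0 \<le> r" "r * q = 2 * b" and tu: "0 < t" "t \<le> u" and z: "0 \<le> z"
    and less: "b / c * tail_transform (\<lambda>t. \<Phi> (f t)) b t < \<Phi> z"
  shows "f u \<le> z * (u / t) powr r"
proof (rule ccontr)
  interpret K: truncated_modulus "\<lambda>t. \<Phi> (f t)" b by (rule K)
  assume greater: "\<not> ?thesis"
  define l where "l = (u / t) powr r"
  define m where "m = (u / t) powr b"
  have "1 \<le> u / t" using tu by simp
  then have l1: "1 \<le> l" and m1: "1 \<le> m"
    unfolding l_def m_def using r K.exponent_pos by (auto simp: ge_one_powr_ge_zero)
  have "l powr q = (u / t) powr (b + b)"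
    unfolding l_def using r by (simp add: powr_powr)
  then have "l powr q = m * m"
    unfolding m_def by (simp only: powr_add)
  then have "c * (m * m) * \<Phi> z \<le> \<Phi> (l * z)" using scale_lower[OF l1 z] by simp
  also have "\<dots> \<le> \<Phi> (f u)" using greater l1 z by (intro mono) (auto simp: l_def mult.commute)
  also have "\<dots> \<le> b * K.T u"
    using K.tail_transform_lower[of u] tu K.exponent_pos by (simp add: pos_divide_le_eq mult.commute)
  also have "\<dots> \<le> b * (m * K.T t)"
    using K.tail_transform_growth[of t u] tu K.exponent_pos unfolding m_def by (intro mult_left_mono) auto
  finally have "m * (c * m * \<Phi> z) \<le> m * (b * K.T t)" by (simp add: mult_ac)
  then have "c * m * \<Phi> z \<le> b * K.T t" using m1 by simp
  moreover have "c * \<Phi> z \<le> c * m * \<Phi> z"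
    using m1 const_pos nonneg[OF z] by (simp add: mult_right_mono)
  ultimately have "c * \<Phi> z \<le> b * K.T t" by linarith
  then show False using less const_pos by (simp add: field_simps)
qed

text \<open>With \<open>D = 4/a\<close>: either \<open>\<Phi>(T/D)\<close> is already controlled by \<open>K\<close>, or the previous lemma gives
  \<open>f u \<le> (T/D) (u/t)\<^sup>a\<^sup>/\<^sup>2\<close> on \<open>[t,1]\<close>, whence \<open>T \<le> (T/D)/(a/2) = T/2\<close> and \<open>T = 0\<close>.\<close>

lemma le_tail_transform_comp:
  assumes f: "truncated_modulus f a" and a: "a \<le> 4" and t: "0 < t" "t \<le> 1"
  shows "\<Phi> (tail_transform f a t) \<le> q / c * tail_transform (\<lambda>t. \<Phi> (f t)) (a * q / 4) t"
proof -
  interpret f: truncated_modulus f a by (rule f)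
  define b where "b = a * q / 4"
  define D where "D = 4 / a"
  define J where "J = tail_transform f a t"
  define z where "z = J / D"
  define K where "K = tail_transform (\<lambda>t. \<Phi> (f t)) b"
  have apos: "0 < a" by (rule f.exponent_pos)
  have bpos: "0 < b" unfolding b_def using apos exponent_pos by simp
  have G: "truncated_modulus (\<lambda>t. \<Phi> (f t)) b"
    by (rule truncated_modulus_comp[OF f bpos])
  have D1: "1 \<le> D" and Db: "D * (b / c) = q / c" unfolding D_def b_def using apos a by auto
  have J0: "0 \<le> J" unfolding J_def using f.tail_transform_nonneg t by simp
  have z0: "0 \<le> z" unfolding z_def using J0 D1 by simp
  have "\<Phi> J \<le> D * (b / c) * K t"
  proof (cases "\<Phi> z \<le> (b / c) * K t")
    case True
    have "\<Phi> J = \<Phi> (D * z)" unfolding z_def using D1 by simp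
    also have "\<dots> \<le> D * \<Phi> z" by (rule scale_upper[OF D1 z0])
    also have "\<dots> \<le> D * ((b / c) * K t)" using True D1 by (intro mult_left_mono) auto
    finally show ?thesis by (simp add: mult.assoc)
  next
    case False
    have "J \<le> z / (a - a / 2)" unfolding J_def
    proof (rule f.tail_transform_upper[OF t _ _ z0])
      show "f u \<le> z * (u / t) powr (a / 2)" if "t \<le> u" for u
        using False apos t that z0 unfolding K_def b_def
        by (intro le_powr_if_tail_transform_comp_less[OF G[unfolded b_def]]) auto
    qed (use apos in auto)
    also have "z / (a - a / 2) = J / 2" unfolding z_def D_def using apos by simp
    finally have "J = 0" using J0 by simp
    moreover have "0 \<le> K t" unfolding K_def using truncated_modulus.tail_transform_nonneg[OF G] t by simp
    ultimately show ?thesis using zero D1 bpos const_pos by simp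
  qed
  then have "\<Phi> J \<le> q / c * K t" by (simp only: Db)
  then show ?thesis unfolding J_def K_def b_def .
qed

lemma set_integrable_tail_transform:
  assumes f: "truncated_modulus f a" and a: "a \<le> 4"
    and int: "set_integrable lborel {0<..1} (\<lambda>t. \<Phi> (f t) / t)"
  shows "set_integrable lborel {0<..1} (\<lambda>t. \<Phi> (tail_transform f a t) / t)"
proof -
  interpret f: truncated_modulus f a by (rule f)
  define b where "b = a * q / 4"
  have bpos: "0 < b" unfolding b_def using f.exponent_pos exponent_pos by simp
  interpret G: truncated_modulus "\<lambda>t. \<Phi> (f t)" b
    by (rule truncated_modulus_comp[OF f bpos])
  show ?thesis
  proof (rule set_integrable_Ioc01_bound)
    show "continuous_on {0<..1} (\<lambda>t. \<Phi> (tail_transform f a t) / t)"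
      by (rule continuous_on_comp_divide[OF continuous_on_subset[OF f.continuous_on_tail_transform]])
         (auto intro: f.tail_transform_nonneg)
    show "set_integrable lborel {0<..1} (\<lambda>t. q / c * (G.T t / t))"
      using G.hardy_inequality[OF int] by (rule set_integrable_mult_right)
    fix t :: real assume t: "0 < t" "t \<le> 1"
    show "\<bar>\<Phi> (tail_transform f a t) / t\<bar> \<le> q / c * (G.T t / t)"
    proof -
      have "\<Phi> (tail_transform f a t) \<le> q / c * G.T t"
        using le_tail_transform_comp[OF f a t] by (simp add: b_def)
      then have "\<Phi> (tail_transform f a t) / t \<le> (q / c * G.T t) / t"
        using t by (intro divide_right_mono) auto
      moreover have "0 \<le> \<Phi> (tail_transform f a t)"
        using nonneg f.tail_transform_nonneg t by simp
      ultimately show ?thesis using t by simp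
    qed
  qed
qed

end

lemma dini_gauge_id: "dini_gauge (\<lambda>x. x) 1 1"
  by unfold_locales (auto intro: continuous_intros)

lemma dini_gauge_powr:
  assumes p: "0 < p" "p \<le> 1"
  shows "dini_gauge (\<lambda>x. x powr p) 1 p"
proof
  show "continuous_on {0..} (\<lambda>x::real. x powr p)"
    by (rule continuous_on_powr') (use p in \<open>auto intro: continuous_intros\<close>)
  show "x powr p \<le> y powr p" if "0 \<le> x" "x \<le> y" for x y :: real
    using powr_mono2[of p x y] p that by simp
  show "(l * x) powr p \<le> l * x powr p" if "1 \<le> l" "0 \<le> x" for l x :: real
  proof -
    have "l powr p \<le> l powr 1" using that p by (intro powr_mono) auto
    then show ?thesis using that by (simp add: powr_mult mult_right_mono)
  qed
  show "1 * l powr p * x powr p \<le> (l * x) powr p" if "1 \<le> l" "0 \<le> x" for l x :: real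
    using that by (simp add: powr_mult)
qed (use p in auto)

text \<open>The gauge \<open>x (1 + ln\<^sup>+(M/x))\<close> turns the logarithmic Dini condition (\<open>s = 1/2\<close>) into an
  instance of the general transfer.\<close>

definition log_plus :: "real \<Rightarrow> real \<Rightarrow> real" where
  "log_plus M x = max 0 (ln (M / x))"

definition log_gauge :: "real \<Rightarrow> real \<Rightarrow> real" where
  "log_gauge M x = x * (1 + log_plus M x)"

lemma log_plus_nonneg: "0 \<le> log_plus M x"
  unfolding log_plus_def by simp

lemma log_plus_le_add_ln:
  assumes "0 < M" "0 < x" "x \<le> y" shows "log_plus M x \<le> log_plus M y + ln (y / x)"
proof -
  have "ln (M / x) = ln (M / y) + ln (y / x)" using assms by (simp add: ln_div)
  moreover have "0 \<le> ln (y / x)" using assms by simp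
  ultimately show ?thesis unfolding log_plus_def by auto
qed

lemma log_plus_antimono: "0 < M \<Longrightarrow> 0 < x \<Longrightarrow> x \<le> y \<Longrightarrow> log_plus M y \<le> log_plus M x"
  unfolding log_plus_def by (simp add: max_def frac_le)

lemma log_gauge_le_sqrt:
  assumes M: "0 < M" and x: "0 < x" shows "log_gauge M x \<le> x + 2 * sqrt M * sqrt x"
proof -
  have "log_plus M x \<le> 2 * sqrt (M / x)"
  proof (cases "1 \<le> M / x")
    case True
    have "ln (M / x) \<le> (M / x) powr (1/2) / (1/2)" by (rule ln_powr_bound[OF True]) simp
    then show ?thesis using M x unfolding log_plus_def by (simp add: powr_half_sqrt)
  next
    case False
    then show ?thesis using M x unfolding log_plus_def by simp
  qed
  then have "x * log_plus M x \<le> x * (2 * sqrt (M / x))" using x by (intro mult_left_mono) auto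
  also have "x * (2 * sqrt (M / x)) = 2 * sqrt M * sqrt x"
    using x by (simp add: real_sqrt_divide field_simps)
  finally show ?thesis unfolding log_gauge_def by (simp add: algebra_simps)
qed

lemma continuous_on_log_gauge:
  assumes M: "0 < M" shows "continuous_on {0..} (log_gauge M)"
proof (rule continuous_on_eq_continuous_within[THEN iffD2], rule ballI)
  fix x :: real assume x: "x \<in> {0..}"
  show "continuous (at x within {0..}) (log_gauge M)"
  proof (cases "x = 0")
    case False
    then have "isCont (log_gauge M) x"
      using x M unfolding log_gauge_def[abs_def] log_plus_def by (auto intro!: continuous_intros)
    then show ?thesis by (rule continuous_at_imp_continuous_within)
  next
    case True
    have pos: "\<forall>\<^sub>F x in at_right 0. (0::real) < x" by (rule eventually_at_right_less)
    have "((\<lambda>x. x + 2 * sqrt M * sqrt x) \<longlongrightarrow> 0 + 2 * sqrt M * sqrt 0) (at_right 0)"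
      by (intro tendsto_intros)
    then have upper_limit: "((\<lambda>x. x + 2 * sqrt M * sqrt x) \<longlongrightarrow> 0) (at_right 0)" by simp
    have lower: "\<forall>\<^sub>F x in at_right 0. 0 \<le> log_gauge M x"
      using pos by (rule eventually_mono) (simp add: log_gauge_def log_plus_nonneg)
    have upper: "\<forall>\<^sub>F x in at_right 0. log_gauge M x \<le> x + 2 * sqrt M * sqrt x"
      using pos by (rule eventually_mono) (rule log_gauge_le_sqrt[OF M])
    have "(log_gauge M \<longlongrightarrow> 0) (at_right 0)"
      by (rule tendsto_sandwich[OF lower upper tendsto_const upper_limit])
    then show ?thesis using True by (simp add: continuous_within at_within_Ici_at_right log_gauge_def)
  qed
qed

lemma log_gauge_mono:
  assumes M: "0 < M" and xy: "0 \<le> x" "x \<le> y" shows "log_gauge M x \<le> log_gauge M y"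
proof (cases "x = 0")
  case True then show ?thesis using xy by (simp add: log_gauge_def log_plus_nonneg)
next
  case False
  then have x: "0 < x" using xy by simp
  have "x * log_plus M x \<le> x * (log_plus M y + ln (y / x))"
    using log_plus_le_add_ln[OF M x xy(2)] x by (intro mult_left_mono) auto
  also have "\<dots> \<le> x * log_plus M y + (y - x)"
  proof -
    have "x * ln (y / x) \<le> x * (y / x - 1)" using x xy by (intro mult_left_mono ln_le_minus_one) auto
    then show ?thesis using x by (simp add: algebra_simps)
  qed
  also have "x * log_plus M y \<le> y * log_plus M y"
    using xy log_plus_nonneg by (intro mult_right_mono) auto
  finally show ?thesis unfolding log_gauge_def by (simp add: algebra_simps)
qed

text \<open>Lower growth with exponent \<open>1/2\<close>: \<open>1 + ln\<^sup>+(M/x) \<le> (1 + ln\<^sup>+(M/(lx))) (1 + ln l)\<close>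
  and \<open>1 + ln l \<le> 2 \<surd>l\<close>.\<close>

lemma log_gauge_scale_lower:
  assumes M: "0 < M" and l: "1 \<le> l" and x: "0 < x"
  shows "1 / 2 * l powr (1 / 2) * log_gauge M x \<le> log_gauge M (l * x)"
proof -
  define s where "s = l powr (1/2)"
  have s1: "1 \<le> s" unfolding s_def using l by (simp add: ge_one_powr_ge_zero)
  have ss: "s * s = l" unfolding s_def using l by (simp add: powr_add[symmetric])
  have "ln s \<le> s - 1" using s1 by (intro ln_le_minus_one) auto
  moreover have "ln l = 2 * ln s" unfolding s_def using l by simp
  ultimately have hl: "1 + ln l \<le> 2 * s" by simp
  have "log_plus M x \<le> log_plus M (l * x) + ln l"
    using log_plus_le_add_ln[OF M x, of "l * x"] l x by simp
  moreover have "0 \<le> log_plus M (l * x) * ln l" using log_plus_nonneg l by simp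
  ultimately have "1 + log_plus M x \<le> (1 + log_plus M (l * x)) * (1 + ln l)"
    by (simp add: algebra_simps)
  also have "\<dots> \<le> (1 + log_plus M (l * x)) * (2 * s)"
    using hl log_plus_nonneg by (intro mult_left_mono) (auto intro: add_nonneg_nonneg)
  finally have h: "1 + log_plus M x \<le> (1 + log_plus M (l * x)) * (2 * s)" .
  have "1 / 2 * l powr (1 / 2) * log_gauge M x = s / 2 * x * (1 + log_plus M x)"
    unfolding log_gauge_def s_def by simp
  also have "\<dots> \<le> s / 2 * x * ((1 + log_plus M (l * x)) * (2 * s))"
    using h s1 x by (intro mult_left_mono) auto
  also have "\<dots> = (s * s) * x * (1 + log_plus M (l * x))" by (simp add: algebra_simps)
  also have "\<dots> = log_gauge M (l * x)" unfolding ss log_gauge_def by simp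
  finally show ?thesis .
qed

lemma dini_gauge_log_gauge:
  assumes M: "0 < M" shows "dini_gauge (log_gauge M) (1/2) (1/2)"
proof
  show "log_gauge M (l * x) \<le> l * log_gauge M x" if "1 \<le> l" "0 \<le> x" for l x
  proof (cases "x = 0")
    case False
    then have "log_plus M (l * x) \<le> log_plus M x"
      using log_plus_antimono[OF M, of x "l * x"] that by simp
    then show ?thesis unfolding log_gauge_def using that by (simp add: mult.assoc mult_left_mono)
  qed (simp add: log_gauge_def)
  show "1 / 2 * l powr (1 / 2) * log_gauge M x \<le> log_gauge M (l * x)" if "1 \<le> l" "0 \<le> x" for l x
    using log_gauge_scale_lower[OF M] that by (cases "x = 0") (auto simp: log_gauge_def)
qed (use continuous_on_log_gauge log_gauge_mono M in \<open>auto simp: log_gauge_def\<close>)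

lemma set_integrable_log_gauge_divide:
  assumes M: "0 < M" shows "set_integrable lborel {0<..1} (\<lambda>t. log_gauge M t / t)"
proof -
  interpret gauge: dini_gauge "log_gauge M" "1/2" "1/2" by (rule dini_gauge_log_gauge[OF M])
  show ?thesis
  proof (rule set_integrable_Ioc01_bound)
    show "continuous_on {0<..1} (\<lambda>t. log_gauge M t / t)"
      by (rule gauge.continuous_on_comp_divide[OF continuous_on_id]) auto
    show "set_integrable lborel {0<..1} (\<lambda>t. 1 + 2 * sqrt M * t powr (1 / 2 - 1))"
      by (intro set_integral_add set_integrable_Ioc01_const set_integrable_mult_right set_integrable_Ioc01_powr) simp
    fix t :: real assume t: "0 < t" "t \<le> 1"
    have "log_gauge M t / t \<le> (t + 2 * sqrt M * sqrt t) / t"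
      using log_gauge_le_sqrt[OF M t(1)] t by (simp add: divide_right_mono)
    also have "\<dots> = 1 + 2 * sqrt M * t powr (1 / 2 - 1)"
    proof -
      have "t powr (1 / 2 - 1) = t powr (1 / 2) / t" using t by (simp only: powr_diff) simp
      then show ?thesis using t by (simp add: add_divide_distrib powr_half_sqrt)
    qed
    finally show "\<bar>log_gauge M t / t\<bar> \<le> 1 + 2 * sqrt M * t powr (1 / 2 - 1)"
      using gauge.nonneg[of t] t by simp
  qed
qed

lemma admissible_modulusD:
  assumes "admissible_modulus wb"
  shows "continuous_on {0..} wb" "\<And>x y. 0 \<le> x \<Longrightarrow> x \<le> y \<Longrightarrow> wb x \<le> wb y"
    "wb 0 = 0" "\<And>x. 0 \<le> x \<Longrightarrow> 0 \<le> wb x"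
  using assms unfolding admissible_modulus_def mono_on_def by auto

lemma admissible_modulus_linear_bound:
  assumes adm: "admissible_modulus wb"
  obtains c where "1 \<le> c" "\<And>t. 1 \<le> t \<Longrightarrow> wb t \<le> c * t"
proof -
  note wb = admissible_modulusD[OF adm]
  have "Limsup at_top (\<lambda>t. ereal (wb t / t)) < \<infinity>" using adm unfolding admissible_modulus_def by simp
  then obtain n :: nat where "Limsup at_top (\<lambda>t. ereal (wb t / t)) < ereal (real n)"
    using less_PInf_Ex_of_nat by (metis less_irrefl)
  then have "\<forall>\<^sub>F t in at_top. ereal (wb t / t) < ereal (real n)" by (rule Limsup_lessD)
  then obtain N where N: "\<And>t. N \<le> t \<Longrightarrow> wb t / t < real n"
    unfolding eventually_at_top_linorder by auto
  define N1 where "N1 = max N 1"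
  have wN: "0 \<le> wb N1" using wb(4)[of N1] by (simp add: N1_def)
  show ?thesis
  proof (rule that[of "1 + real n + wb N1"])
    fix t :: real assume t: "1 \<le> t"
    show "wb t \<le> (1 + real n + wb N1) * t"
    proof (cases "N1 \<le> t")
      case True
      then have "wb t < real n * t" using N[of t] t by (simp add: N1_def pos_divide_less_eq)
      also have "\<dots> \<le> (1 + real n + wb N1) * t" using t wN by (intro mult_right_mono) auto
      finally show ?thesis by simp
    next
      case False
      then have "wb t \<le> wb N1" using wb(2)[of t N1] t by simp
      also have "\<dots> \<le> (1 + real n + wb N1) * 1" by simp
      also have "\<dots> \<le> (1 + real n + wb N1) * t" using t wN by (intro mult_left_mono) auto
      finally show ?thesis .
    qed
  qed (use wN in simp)
qed

lemma admissible_modulus_continuous_on_Ioc01: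
  "admissible_modulus wb \<Longrightarrow> continuous_on {0<..1} wb"
  by (rule continuous_on_subset[OF admissible_modulusD(1)]) auto

lemma admissible_modulus_small_near_0:
  assumes adm: "admissible_modulus wb" and "0 < \<epsilon>"
  obtains \<tau> where "0 < \<tau>" "\<And>t. 0 < t \<Longrightarrow> t < \<tau> \<Longrightarrow> wb t < \<epsilon>"
proof -
  note wb = admissible_modulusD[OF adm]
  have "(wb \<longlongrightarrow> wb 0) (at 0 within {0..})" using wb(1) by (simp add: continuous_on_def)
  then have "(wb \<longlongrightarrow> 0) (at_right 0)" using wb(3) by (simp add: at_within_Ici_at_right)
  then have "\<forall>\<^sub>F t in at_right 0. wb t < \<epsilon>" using assms(2) by (intro order_tendstoD)
  then show ?thesis using that unfolding eventually_at_right_field by auto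
qed

section \<open>Reformulations of the \<open>2s\<close>-Dini condition\<close>

lemma set_integrable_Ioc01_if_bounded_near_0:
  fixes g h :: "real \<Rightarrow> real"
  assumes cont: "continuous_on {0<..1} g" and nonneg: "\<And>t. 0 < t \<Longrightarrow> t \<le> 1 \<Longrightarrow> 0 \<le> g t"
    and h: "set_integrable lborel {0<..1} h" "\<And>t. 0 < t \<Longrightarrow> t \<le> 1 \<Longrightarrow> 0 \<le> h t"
    and near: "0 < \<tau>" "\<And>t. 0 < t \<Longrightarrow> t \<le> 1 \<Longrightarrow> t < \<tau> \<Longrightarrow> g t \<le> h t"
    and far: "\<And>t. 0 < t \<Longrightarrow> t \<le> 1 \<Longrightarrow> g t \<le> D / t"
  shows "set_integrable lborel {0<..1} g"
proof (rule set_integrable_Ioc01_bound[OF cont])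
  show "set_integrable lborel {0<..1} (\<lambda>t. h t + \<bar>D\<bar> / \<tau>)"
    using h(1) set_integrable_Ioc01_const by (rule set_integral_add)
  fix t :: real assume t: "0 < t" "t \<le> 1"
  show "\<bar>g t\<bar> \<le> h t + \<bar>D\<bar> / \<tau>"
  proof (cases "t < \<tau>")
    case True
    have "0 \<le> \<bar>D\<bar> / \<tau>" using near(1) by simp
    then show ?thesis using near(2)[OF t True] nonneg[OF t] by simp
  next
    case False
    have "g t \<le> \<bar>D\<bar> / t" using far[OF t] t by (smt (verit) divide_right_mono abs_ge_self)
    also have "\<dots> \<le> \<bar>D\<bar> / \<tau>" using False near(1) by (intro divide_left_mono) auto
    finally show ?thesis using nonneg[OF t] h(2)[OF t] by simp
  qed
qed

lemma set_integrable_Ioc01_if_modulus_vanishes: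
  fixes g :: "real \<Rightarrow> real"
  assumes adm: "admissible_modulus wb" and "wb 1 = 0" and "continuous_on {0<..1} g"
    and "\<And>t. 0 < t \<Longrightarrow> t \<le> 1 \<Longrightarrow> wb t = 0 \<Longrightarrow> g t = 0"
  shows "set_integrable lborel {0<..1} g"
proof (rule set_integrable_Ioc01_bound[OF assms(3) set_integrable_Ioc01_const[of 0]])
  fix t :: real assume t: "0 < t" "t \<le> 1"
  have "wb t = 0"
    using admissible_modulusD(2)[OF adm, of t 1] admissible_modulusD(4)[OF adm, of t] t assms(2) by simp
  then show "\<bar>g t\<bar> \<le> 0" using assms(4)[OF t] by simp
qed

text \<open>If \<open>wb 1 > 0\<close>, continuity at \<open>0\<close> keeps the set where \<open>wb t > \<kappa> wb 1\<close> away from \<open>0\<close>, and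
  there \<open>g t \<le> D / t\<close> is bounded.\<close>

lemma set_integrable_Ioc01_if_bounded_where_modulus_small:
  fixes g h :: "real \<Rightarrow> real"
  assumes adm: "admissible_modulus wb" and cont: "continuous_on {0<..1} g"
    and nonneg: "\<And>t. 0 < t \<Longrightarrow> t \<le> 1 \<Longrightarrow> 0 \<le> g t"
    and vanish: "\<And>t. 0 < t \<Longrightarrow> t \<le> 1 \<Longrightarrow> wb t = 0 \<Longrightarrow> g t = 0"
    and h: "set_integrable lborel {0<..1} h" "\<And>t. 0 < t \<Longrightarrow> t \<le> 1 \<Longrightarrow> 0 \<le> h t"
    and \<kappa>: "0 < \<kappa>"
    and small: "\<And>t. 0 < t \<Longrightarrow> t \<le> 1 \<Longrightarrow> 0 < wb t \<Longrightarrow> wb t \<le> \<kappa> * wb 1 \<Longrightarrow> g t \<le> h t"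
    and far: "\<And>t. 0 < t \<Longrightarrow> t \<le> 1 \<Longrightarrow> g t \<le> D / t"
  shows "set_integrable lborel {0<..1} g"
proof (cases "wb 1 = 0")
  case True
  then show ?thesis by (rule set_integrable_Ioc01_if_modulus_vanishes[OF adm _ cont vanish])
next
  case False
  then have "0 < \<kappa> * wb 1" using admissible_modulusD(4)[OF adm, of 1] \<kappa> by simp
  then obtain \<tau> where \<tau>: "0 < \<tau>" "\<And>t. 0 < t \<Longrightarrow> t < \<tau> \<Longrightarrow> wb t < \<kappa> * wb 1"
    using admissible_modulus_small_near_0[OF adm] by blast
  show ?thesis
  proof (rule set_integrable_Ioc01_if_bounded_near_0[OF cont nonneg h \<tau>(1) _ far])
    fix t :: real assume t: "0 < t" "t \<le> 1" "t < \<tau>"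
    show "g t \<le> h t"
    proof (cases "wb t = 0")
      case True
      then show ?thesis using vanish h(2) t by simp
    next
      case False
      then show ?thesis
        using small[OF t(1,2)] \<tau>(2)[OF t(1,3)] admissible_modulusD(4)[OF adm, of t] t by simp
    qed
  qed
qed

lemma two_s_dini_imp_powr_dini:
  assumes adm: "admissible_modulus wb" and s: "0 < s" "s < 1/2" and dini: "two_s_dini s wb"
  shows "set_integrable lborel {0<..1} (\<lambda>t. wb t powr (2 * s) / t)"
proof -
  note wb = admissible_modulusD[OF adm]
  define e where "e = 2 * s - 1"
  have e: "e < 0" "2 * s = 1 + e" unfolding e_def using s by auto
  define h where "h t = wb t / t * ((wb t powr e - wb 1 powr e) / (1 - 2 * s))" for t
  have hint: "set_integrable lborel {0<..1} h"
    using dini s unfolding two_s_dini_def h_def e_def by simp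
  have "continuous_on {0<..1} (\<lambda>t. wb t powr (2 * s))"
    by (rule continuous_on_powr'[OF admissible_modulus_continuous_on_Ioc01[OF adm] continuous_on_const])
       (use s wb(4) in simp)
  then have cont: "continuous_on {0<..1} (\<lambda>t. wb t powr (2 * s) / t)"
    by (rule continuous_on_divide[OF _ continuous_on_id]) auto
  have le1: "wb t \<le> wb 1" if "0 < t" "t \<le> 1" for t using wb(2)[of t 1] that by simp
  define \<kappa> where "\<kappa> = 2 powr (1 / e)"
  have \<kappa>: "0 < \<kappa>" "\<kappa> powr e = 2" unfolding \<kappa>_def using e by (simp_all add: powr_powr)
  show ?thesis
  proof (rule set_integrable_Ioc01_if_bounded_where_modulus_small[OF adm cont _ _
        set_integrable_mult_right[OF hint, of "2 * (1 - 2 * s)"] _ \<kappa>(1)])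
    show "0 \<le> 2 * (1 - 2 * s) * h t" if t: "0 < t" "t \<le> 1" for t
    proof (cases "wb t = 0")
      case False
      then have "0 < wb t" using wb(4)[of t] t by simp
      then have "wb 1 powr e \<le> wb t powr e" using powr_mono2'[of e "wb t" "wb 1"] e le1[OF t] by simp
      then show ?thesis unfolding h_def using wb(4)[of t] t s by simp
    qed (simp add: h_def)
    show "wb t powr (2 * s) / t \<le> 2 * (1 - 2 * s) * h t"
      if t: "0 < t" "t \<le> 1" and wt: "0 < wb t" and small: "wb t \<le> \<kappa> * wb 1" for t
    proof -
      have "(\<kappa> * wb 1) powr e \<le> wb t powr e"
        using powr_mono2'[of e "wb t" "\<kappa> * wb 1"] e wt small by simp
      then have "wb t powr e / 2 \<le> wb t powr e - wb 1 powr e"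
        using \<kappa> le1[OF t] wt by (simp add: powr_mult)
      then have "wb t * (wb t powr e / 2) \<le> wb t * (wb t powr e - wb 1 powr e)"
        using wt by (intro mult_left_mono) auto
      moreover have "wb t powr (2 * s) = wb t * wb t powr e" using wt by (simp add: e powr_add)
      ultimately have "wb t powr (2 * s) / t \<le> 2 * (wb t * (wb t powr e - wb 1 powr e)) / t"
        using t by (intro divide_right_mono) auto
      also have "\<dots> = 2 * (1 - 2 * s) * h t" unfolding h_def using s t by (simp add: field_simps)
      finally show ?thesis .
    qed
    show "wb t powr (2 * s) / t \<le> wb 1 powr (2 * s) / t" if "0 < t" "t \<le> 1" for t
      using le1[OF that] wb(4)[of t] that s by (intro divide_right_mono powr_mono2) auto
  qed (use s in simp_all)
qed

lemma two_s_dini_imp_dini: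
  assumes adm: "admissible_modulus wb" and s: "1/2 < s" "s < 1" and dini: "two_s_dini s wb"
  shows "dini wb"
proof -
  note wb = admissible_modulusD[OF adm]
  define e where "e = 2 * s - 1"
  have e: "0 < e" "1 - 2 * s = - e" unfolding e_def using s by auto
  define h where "h t = wb t / t * ((wb 1 powr e - wb t powr e) / e)" for t
  have "set_integrable lborel {0<..1} (\<lambda>t. wb t / t * ((wb t powr e - wb 1 powr e) / (1 - 2 * s)))"
    using dini s unfolding two_s_dini_def e_def by simp
  moreover have "(wb t powr e - wb 1 powr e) / (1 - 2 * s) = (wb 1 powr e - wb t powr e) / e" for t
    unfolding e(2) by (metis minus_diff_eq minus_divide_left minus_divide_right)
  ultimately have hint: "set_integrable lborel {0<..1} h" unfolding h_def by simp
  have cont: "continuous_on {0<..1} (\<lambda>t. wb t / t)"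
    by (rule continuous_on_divide[OF admissible_modulus_continuous_on_Ioc01[OF adm] continuous_on_id]) auto
  have le1: "wb t \<le> wb 1" if "0 < t" "t \<le> 1" for t using wb(2)[of t 1] that by simp
  define \<kappa> where "\<kappa> = 2 powr (- 1 / e)"
  have "\<kappa> powr e = 2 powr (- 1 / e * e)" unfolding \<kappa>_def by (simp only: powr_powr)
  also have "- 1 / e * e = -1" using e by simp
  finally have \<kappa>: "0 < \<kappa>" "\<kappa> powr e = 1 / 2" unfolding \<kappa>_def by (simp_all add: powr_minus_divide)
  show ?thesis unfolding dini_def
  proof (rule set_integrable_Ioc01_if_bounded_where_modulus_small[OF adm cont _ _
        set_integrable_mult_right[OF hint, of "2 * e / wb 1 powr e"] _ \<kappa>(1)])
    show "0 \<le> 2 * e / wb 1 powr e * h t" if t: "0 < t" "t \<le> 1" for t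
    proof -
      have "wb t powr e \<le> wb 1 powr e" using powr_mono2[of e "wb t" "wb 1"] e wb(4)[of t] le1[OF t] t by simp
      then show ?thesis unfolding h_def using e t wb(4)[of t] by simp
    qed
    show "wb t / t \<le> 2 * e / wb 1 powr e * h t"
      if t: "0 < t" "t \<le> 1" and wt: "0 < wb t" and small: "wb t \<le> \<kappa> * wb 1" for t
    proof -
      have w1: "0 < wb 1" using le1[OF t] wt by simp
      have "wb t powr e \<le> (\<kappa> * wb 1) powr e"
        using powr_mono2[of e "wb t" "\<kappa> * wb 1"] e wt small by simp
      then have "wb 1 powr e / 2 \<le> wb 1 powr e - wb t powr e" using \<kappa> w1 by (simp add: powr_mult)
      then have "wb t / t * (wb 1 powr e / 2) \<le> wb t / t * (wb 1 powr e - wb t powr e)"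
        using wt t by (intro mult_left_mono) auto
      then have "2 / wb 1 powr e * (wb t / t * (wb 1 powr e / 2))
          \<le> 2 / wb 1 powr e * (wb t / t * (wb 1 powr e - wb t powr e))"
        by (rule mult_left_mono) (use w1 in simp_all)
      moreover have "2 / wb 1 powr e * (wb t / t * (wb 1 powr e / 2)) = wb t / t" using w1 by simp
      moreover have "2 * e / wb 1 powr e * h t = 2 / wb 1 powr e * (wb t / t * (wb 1 powr e - wb t powr e))"
        unfolding h_def using e by simp
      ultimately show ?thesis by simp
    qed
    show "wb t / t \<le> wb 1 / t" if "0 < t" "t \<le> 1" for t
      using le1[OF that] that by (simp add: divide_right_mono)
  qed (use wb(4) in simp_all)
qed

lemma two_s_dini_half_imp_dini:
  assumes adm: "admissible_modulus wb" and dini: "two_s_dini (1/2) wb"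
  shows "dini wb"
proof -
  note wb = admissible_modulusD[OF adm]
  define h where "h t = wb t / t * ln (wb 1 / wb t)" for t
  have hint: "set_integrable lborel {0<..1} h"
    using dini unfolding two_s_dini_def h_def by simp
  have cont: "continuous_on {0<..1} (\<lambda>t. wb t / t)"
    by (rule continuous_on_divide[OF admissible_modulus_continuous_on_Ioc01[OF adm] continuous_on_id]) auto
  have le1: "wb t \<le> wb 1" if "0 < t" "t \<le> 1" for t using wb(2)[of t 1] that by simp
  show ?thesis unfolding dini_def
  proof (rule set_integrable_Ioc01_if_bounded_where_modulus_small[OF adm cont _ _ hint _ exp_gt_zero])
    show "0 \<le> h t" if t: "0 < t" "t \<le> 1" for t
      using le1[OF t] wb(4)[of t] t by (cases "wb t = 0") (auto simp: h_def)
    show "wb t / t \<le> h t"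
      if t: "0 < t" "t \<le> 1" and wt: "0 < wb t" and small: "wb t \<le> exp (-1) * wb 1" for t
    proof -
      have "exp 1 \<le> wb 1 / wb t" using small wt by (simp add: exp_minus field_simps)
      then have "1 \<le> ln (wb 1 / wb t)"
        using wt le1[OF t] by (metis ln_exp ln_le_cancel_iff exp_gt_zero order.strict_trans2)
      then have "wb t / t * 1 \<le> wb t / t * ln (wb 1 / wb t)"
        using wt t by (intro mult_left_mono) auto
      then show ?thesis unfolding h_def by simp
    qed
    show "wb t / t \<le> wb 1 / t" if "0 < t" "t \<le> 1" for t
      using le1[OF that] that by (simp add: divide_right_mono)
  qed (use wb(4) in simp_all)
qed

lemma two_s_dini_half_imp_log_gauge_dini:
  assumes adm: "admissible_modulus wb" and dini: "two_s_dini (1/2) wb" and M: "0 < M"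
  shows "set_integrable lborel {0<..1} (\<lambda>t. log_gauge M (wb t) / t)"
proof -
  note wb = admissible_modulusD[OF adm]
  interpret gauge: dini_gauge "log_gauge M" "1/2" "1/2" by (rule dini_gauge_log_gauge[OF M])
  define K where "K = 1 + \<bar>ln (M / wb 1)\<bar>"
  have cont: "continuous_on {0<..1} (\<lambda>t. log_gauge M (wb t) / t)"
    by (rule gauge.continuous_on_comp_divide[OF admissible_modulus_continuous_on_Ioc01[OF adm]])
       (use wb(4) in simp)
  have "set_integrable lborel {0<..1} (\<lambda>t. wb t / t)"
    using two_s_dini_half_imp_dini[OF adm dini] unfolding dini_def .
  moreover have "set_integrable lborel {0<..1} (\<lambda>t. wb t / t * ln (wb 1 / wb t))"
    using dini unfolding two_s_dini_def by simp
  ultimately have bound: "set_integrable lborel {0<..1} (\<lambda>t. K * (wb t / t) + wb t / t * ln (wb 1 / wb t))"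
    by (intro set_integral_add set_integrable_mult_right)
  show ?thesis
  proof (rule set_integrable_Ioc01_bound[OF cont bound])
    fix t :: real assume t: "0 < t" "t \<le> 1"
    show "\<bar>log_gauge M (wb t) / t\<bar> \<le> K * (wb t / t) + wb t / t * ln (wb 1 / wb t)"
    proof (cases "wb t = 0")
      case False
      then have wt: "0 < wb t" using wb(4)[of t] t by simp
      have le1: "wb t \<le> wb 1" using wb(2)[of t 1] t by simp
      then have "ln (M / wb t) = ln (M / wb 1) + ln (wb 1 / wb t)" using M wt by (simp add: ln_div)
      moreover have "0 \<le> ln (wb 1 / wb t)" using le1 wt by simp
      ultimately have "log_plus M (wb t) \<le> \<bar>ln (M / wb 1)\<bar> + ln (wb 1 / wb t)"
        unfolding log_plus_def by auto
      then have "log_gauge M (wb t) \<le> wb t * (K + ln (wb 1 / wb t))"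
        unfolding log_gauge_def K_def using wt by (intro mult_left_mono) auto
      then have "log_gauge M (wb t) / t \<le> K * (wb t / t) + wb t / t * ln (wb 1 / wb t)"
        using t by (simp add: divide_right_mono algebra_simps add_divide_distrib[symmetric])
      then show ?thesis using gauge.nonneg[of "wb t"] wt t by simp
    qed (simp add: log_gauge_def)
  qed
qed

section \<open>The concave majorant\<close>

text \<open>The summand \<open>min u 1\<close> makes \<open>truncate wb 1 \<ge> 1\<close>, which forces the tail transform to
  be at least \<open>t\<^sup>a / a\<close> near \<open>0\<close>.\<close>

definition truncate :: "(real \<Rightarrow> real) \<Rightarrow> real \<Rightarrow> real" where
  "truncate wb u = wb (min u 1) + min u 1"

text \<open>All three summands vanish at \<open>t = 0\<close>, since \<open>0 powr a = 0\<close> and \<open>x / 0 = 0\<close>.\<close>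

definition majorant :: "(real \<Rightarrow> real) \<Rightarrow> real \<Rightarrow> real \<Rightarrow> real \<Rightarrow> real" where
  "majorant wb a c t = tail_transform (truncate wb) a t + average (truncate wb) t + c * t"

locale majorant_construction =
  fixes wb :: "real \<Rightarrow> real" and \<iota> c :: real
  assumes admissible: "admissible_modulus wb" and \<iota>_pos: "0 < \<iota>" and \<iota>_less: "\<iota> < 1/3"
    and c_ge_1: "1 \<le> c" and linear_bound: "\<And>t. 1 \<le> t \<Longrightarrow> wb t \<le> c * t"
begin

abbreviation "a \<equiv> \<iota> / 2"
abbreviation "f \<equiv> truncate wb"
abbreviation "w \<equiv> majorant wb a c"
abbreviation "V \<equiv> average f"

lemma a_pos: "0 < a" and a_less_1: "a < 1" using \<iota>_pos \<iota>_less by auto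

sublocale truncated_modulus f a
proof
  note wb = admissible_modulusD[OF admissible]
  have "continuous_on {0..} (\<lambda>u. wb (min u 1))"
    by (rule continuous_on_compose2[OF wb(1)]) (auto intro!: continuous_intros)
  then show "continuous_on {0..} f" unfolding truncate_def[abs_def] by (intro continuous_intros)
  show "f x \<le> f y" if "0 \<le> x" "x \<le> y" for x y
  proof -
    have m: "min x 1 \<le> min y 1" using that by auto
    then have "wb (min x 1) \<le> wb (min y 1)" using wb(2) that by simp
    then show ?thesis unfolding truncate_def using m by simp
  qed
qed (use a_pos admissible_modulusD(4)[OF admissible] in \<open>auto simp: truncate_def\<close>)

lemma truncate_0: "f 0 = 0"
  by (simp add: truncate_def admissible_modulusD(3)[OF admissible])

lemma truncate_eq: "0 \<le> t \<Longrightarrow> t \<le> 1 \<Longrightarrow> f t = wb t + t"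
  by (simp add: truncate_def)

lemma truncate_bounds:
  assumes "0 < t" shows "f t \<le> a * T t" "0 \<le> V t" "V t \<le> f t" "0 \<le> f t"
  using tail_transform_lower[of t] a_pos average_nonneg[of t] average_le[of t] nonneg[of t] assms
  by (auto simp: pos_divide_le_eq mult.commute)

definition w1 :: "real \<Rightarrow> real" where
  "w1 t = (a * T t - V t) / t + c"

definition w2 :: "real \<Rightarrow> real" where
  "w2 t = (a * (a - 1) * T t + 2 * V t - (a + 1) * f t) / t^2"

lemma majorant_0: "w 0 = 0"
  by (simp add: majorant_def tail_transform_def average_def)

lemma majorant_has_derivative: "0 < t \<Longrightarrow> (w has_real_derivative w1 t) (at t)"
  unfolding majorant_def[abs_def] w1_def
  by (rule DERIV_cong[OF DERIV_add[OF DERIV_add[OF tail_transform_has_derivative average_has_derivative]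
        DERIV_cmult[OF DERIV_ident]]]) (auto simp: diff_divide_distrib)

lemma w1_has_derivative:
  assumes t: "0 < t" shows "(w1 has_real_derivative w2 t) (at t)"
proof -
  have "(w1 has_real_derivative
     ((a * ((a * T t - f t) / t) - (f t - V t) / t) * t - (a * T t - V t) * 1) / (t * t) + 0) (at t)"
    unfolding w1_def[abs_def] using t
    by (intro DERIV_add DERIV_divide DERIV_diff DERIV_cmult tail_transform_has_derivative
        average_has_derivative DERIV_ident DERIV_const) simp_all
  moreover have "((a * ((a * T t - f t) / t) - (f t - V t) / t) * t - (a * T t - V t) * 1) / (t * t) + 0 = w2 t"
    using t unfolding w2_def power2_eq_square by (simp add: diff_divide_distrib algebra_simps)
  ultimately show ?thesis by simp
qed

lemma deriv_majorant: "0 < t \<Longrightarrow> deriv w t = w1 t"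
  by (rule DERIV_imp_deriv[OF majorant_has_derivative])

lemma deriv_majorant_has_derivative:
  assumes "0 < t" shows "(deriv w has_real_derivative w2 t) (at t)"
proof -
  have "\<forall>\<^sub>F x in nhds t. deriv w x = w1 x"
    using eventually_nhds_in_open[of "{0<..}" t] assms by (auto elim!: eventually_mono simp: deriv_majorant)
  then show ?thesis using w1_has_derivative[OF assms] DERIV_cong_ev[OF refl _ refl] by blast
qed

lemma deriv2_majorant: "0 < t \<Longrightarrow> deriv (deriv w) t = w2 t"
  by (rule DERIV_imp_deriv[OF deriv_majorant_has_derivative])

lemma continuous_on_w2: "continuous_on {0<..} w2"
  unfolding w2_def[abs_def]
  by (intro continuous_intros continuous_on_tail_transform continuous_on_average
      continuous_on_subset[OF cont]) auto

lemma w1_pos: "0 < t \<Longrightarrow> 0 < w1 t"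
  unfolding w1_def using truncate_bounds[of t] c_ge_1 by (smt (verit) divide_nonneg_pos)

lemma w2_nonpos: assumes t: "0 < t" shows "w2 t \<le> 0"
proof -
  have "(a - 1) * (a * T t) \<le> (a - 1) * f t"
    using truncate_bounds[OF t] a_less_1 by (intro mult_left_mono_neg) auto
  moreover have "(a - 1) * f t + 2 * V t - (a + 1) * f t = 2 * V t - 2 * f t"
    by (simp add: algebra_simps)
  ultimately have "a * (a - 1) * T t + 2 * V t - (a + 1) * f t \<le> 2 * V t - 2 * f t"
    by (simp add: mult_ac)
  also have "\<dots> \<le> 0" using truncate_bounds[OF t] by simp
  finally show ?thesis unfolding w2_def by (rule divide_nonpos_nonneg) simp
qed

lemma majorant_ge_linear: "0 < t \<Longrightarrow> c * t \<le> w t"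
  unfolding majorant_def using tail_transform_nonneg[of t] truncate_bounds by auto

lemma majorant_nonneg: "0 \<le> t \<Longrightarrow> 0 \<le> w t"
  using majorant_ge_linear[of t] c_ge_1 majorant_0 by (cases "t = 0") (auto intro: order_trans[rotated])

lemma majorant_ge: assumes t: "0 \<le> t" shows "wb t \<le> w t"
proof (cases "t \<le> 1")
  case True
  show ?thesis
  proof (cases "t = 0")
    case False
    then have tp: "0 < t" using t by simp
    have "wb t \<le> f t" using truncate_eq[OF t True] t by simp
    also have "\<dots> \<le> a * T t" using truncate_bounds[OF tp] by simp
    also have "\<dots> \<le> T t" using tail_transform_nonneg[OF tp] a_pos a_less_1 by (intro mult_left_le_one_le) auto
    also have "\<dots> \<le> w t" unfolding majorant_def using truncate_bounds[OF tp] c_ge_1 tp by simp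
    finally show ?thesis .
  qed (simp add: majorant_0 admissible_modulusD(3)[OF admissible])
next
  case False
  then have "wb t \<le> c * t" using linear_bound by simp
  also have "\<dots> \<le> w t" using majorant_ge_linear False by simp
  finally show ?thesis .
qed

lemma majorant_tendsto_0: "(w \<longlongrightarrow> 0) (at_right 0)"
proof -
  have "(f \<longlongrightarrow> f 0) (at 0 within {0..})"
    using cont by (simp add: continuous_on_def)
  then have f: "(f \<longlongrightarrow> 0) (at_right 0)"
    using truncate_0 by (simp add: at_within_Ici_at_right)
  have pos: "\<forall>\<^sub>F x in at_right 0. (0::real) < x" by (rule eventually_at_right_less)
  have lower: "\<forall>\<^sub>F x in at_right 0. 0 \<le> V x"
    using pos by (rule eventually_mono) (rule truncate_bounds(2))
  have upper: "\<forall>\<^sub>F x in at_right 0. V x \<le> f x"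
    using pos by (rule eventually_mono) (rule truncate_bounds(3))
  have "(V \<longlongrightarrow> 0) (at_right 0)"
    by (rule tendsto_sandwich[OF lower upper tendsto_const f])
  then have "((\<lambda>x. T x + V x + c * x) \<longlongrightarrow> 0 + 0 + c * 0) (at_right 0)"
    by (intro tendsto_intros tail_transform_tendsto_0 truncate_0)
  then show ?thesis unfolding majorant_def[abs_def] by simp
qed

lemma continuous_on_majorant: "continuous_on {0..} w"
proof (rule continuous_on_eq_continuous_within[THEN iffD2], rule ballI)
  fix x :: real assume x: "x \<in> {0..}"
  show "continuous (at x within {0..}) w"
  proof (cases "x = 0")
    case True
    then show ?thesis using majorant_tendsto_0
      by (simp add: continuous_within at_within_Ici_at_right majorant_0)
  next
    case False
    then have "0 < x" using x by simp
    then show ?thesis using majorant_has_derivative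
      by (meson DERIV_isCont continuous_at_imp_continuous_within)
  qed
qed

lemma strict_mono_on_majorant: "strict_mono_on {0..} w"
proof (rule strict_mono_onI)
  fix x y :: real assume x: "x \<in> {0..}" and xy: "x < y"
  show "w x < w y"
  proof (cases "x = 0")
    case True
    then show ?thesis using majorant_ge_linear[of y] c_ge_1 xy majorant_0
      by (smt (verit) mult_pos_pos)
  next
    case False
    show ?thesis
    proof (rule DERIV_pos_imp_increasing[OF xy])
      fix z assume "x \<le> z"
      then have "0 < z" using x False by simp
      then show "\<exists>d. (w has_real_derivative d) (at z) \<and> 0 < d"
        using majorant_has_derivative w1_pos by blast
    qed
  qed
qed

lemma w1_antimono:
  assumes "0 < x" "x \<le> y" shows "w1 y \<le> w1 x"
proof (rule DERIV_nonpos_imp_nonincreasing[OF assms(2)])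
  fix z assume "x \<le> z"
  then have "0 < z" using assms by simp
  then show "\<exists>d. (w1 has_real_derivative d) (at z) \<and> d \<le> 0"
    using w1_has_derivative w2_nonpos by blast
qed

lemma concave_on_majorant_pos: "concave_on {0<..} w"
  unfolding concave_on_def
proof (rule convex_on_realI[where f' = "\<lambda>x. - w1 x"])
  fix x :: real assume "x \<in> {0<..}"
  then show "((\<lambda>x. - w x) has_real_derivative - w1 x) (at x)"
    using majorant_has_derivative by (intro DERIV_minus) auto
next
  fix x y :: real assume "x \<in> {0<..}" "x \<le> y"
  then show "- w1 x \<le> - w1 y" using w1_antimono by simp
qed simp

text \<open>At the endpoint \<open>0\<close>, concavity follows from concavity on \<open>(0,\<infinity>)\<close> by letting the
  left point tend to \<open>0\<close>.\<close>

lemma concave_on_majorant: "concave_on {0..} w"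
  unfolding concave_on_def
proof (rule convex_on_linorderI)
  fix t x y :: real assume t: "0 < t" "t < 1" and x: "x \<in> {0..}" and xy: "x < y"
  have "(1 - t) * w x + t * w y \<le> w ((1 - t) * x + t * y)"
  proof (cases "x = 0")
    case True
    have "((\<lambda>u. (1 - t) * w u + t * w y) \<longlongrightarrow> (1 - t) * 0 + t * w y) (at_right 0)"
      by (intro tendsto_intros majorant_tendsto_0)
    moreover have "((\<lambda>u. w ((1 - t) * u + t * y)) \<longlongrightarrow> w ((1 - t) * 0 + t * y)) (at_right 0)"
    proof (rule continuous_on_tendsto_compose[OF continuous_on_majorant])
      show "((\<lambda>u. (1 - t) * u + t * y) \<longlongrightarrow> (1 - t) * 0 + t * y) (at_right 0)"
        by (intro tendsto_intros)
      show "\<forall>\<^sub>F u in at_right 0. (1 - t) * u + t * y \<in> {0..}"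
        using eventually_at_right_less[of 0] by eventually_elim (use t True xy in simp)
    qed (use t True xy in simp)
    moreover have "\<forall>\<^sub>F u in at_right 0. (1 - t) * w u + t * w y \<le> w ((1 - t) * u + t * y)"
      using eventually_at_right_less[of 0] by eventually_elim
        (use t True xy concave_on_majorant_pos in \<open>auto simp: concave_on_iff\<close>)
    ultimately have "(1 - t) * 0 + t * w y \<le> w ((1 - t) * 0 + t * y)"
      by (intro tendsto_le[OF _ _ _ ]) auto
    then show ?thesis using True majorant_0 by simp
  next
    case False
    then show ?thesis using x xy t concave_on_majorant_pos by (auto simp: concave_on_iff)
  qed
  then show "- w ((1 - t) *\<^sub>R x + t *\<^sub>R y) \<le> (1 - t) * - w x + t * - w y" by simp
qed simp

lemma majorant_differential_inequality:
  assumes t: "0 < t" shows "- w t - 3 * t * deriv w t \<le> t^2 * deriv (deriv w) t"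
proof -
  have "t^2 * w2 t = a * (a - 1) * T t + 2 * V t - (a + 1) * f t"
    using t by (simp add: w2_def)
  moreover have "t * w1 t = a * T t - V t + c * t"
    using t by (simp add: w1_def distrib_left)
  moreover have "3 * t * w1 t = 3 * (t * w1 t)" by simp
  moreover have "w t = T t + V t + c * t" by (simp add: majorant_def)
  moreover have "(a + 1) * f t \<le> (a + 1) * (a * T t)"
    using truncate_bounds[OF t] a_pos by (intro mult_left_mono) auto
  moreover have "a * (a - 1) * T t = (a + 1) * (a * T t) - 2 * (a * T t)"
    and "(a + 1) * T t = a * T t + T t" by (simp_all add: algebra_simps)
  moreover have "0 \<le> T t" "0 \<le> c * t" using tail_transform_nonneg[OF t] c_ge_1 t by simp_all
  moreover note truncate_bounds[OF t]
  ultimately have "- w t - 3 * t * w1 t \<le> t^2 * w2 t" by linarith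
  then show ?thesis using deriv_majorant[OF t] deriv2_majorant[OF t] by simp
qed

definition threshold :: real where
  "threshold = (c + 1) powr (-2)"

lemma threshold_pos: "0 < threshold" and threshold_le_1: "threshold \<le> 1"
  unfolding threshold_def using c_ge_1 by (auto simp: powr_minus_divide intro!: ge_one_powr_ge_zero)

lemma powr_le_tail_transform:
  assumes x: "0 < x" "x \<le> 1" shows "x powr a \<le> a * T x"
proof -
  have "f 1 / a \<le> (1 / x) powr a * T x"
    using tail_transform_growth[of x 1] tail_transform_ge_1[of 1] x by simp
  then have "x powr a * (f 1 / a) \<le> x powr a * ((1 / x) powr a * T x)"
    by (intro mult_left_mono) auto
  also have "\<dots> = T x" using x by (simp add: powr_divide)
  finally have "x powr a * f 1 \<le> a * T x" using a_pos by (simp add: field_simps)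
  moreover have "1 \<le> f 1"
    using truncate_eq[of 1] admissible_modulusD(4)[OF admissible, of 1] by simp
  then have "x powr a * 1 \<le> x powr a * f 1" by (intro mult_left_mono) auto
  ultimately show ?thesis by linarith
qed

lemma linear_less_powr:
  assumes x: "0 < x" "x < threshold" shows "c * x < x powr a"
proof -
  have "x powr (1 - a) \<le> x powr (1/2)"
    using x threshold_le_1 \<iota>_less by (intro powr_mono') auto
  also have "\<dots> < threshold powr (1/2)" using x by (intro powr_less_mono2) auto
  also have "threshold powr (1/2) = 1 / (c + 1)"
    unfolding threshold_def using c_ge_1 by (simp only: powr_powr) (simp add: powr_minus_divide)
  finally have "c * x powr (1 - a) < c * (1 / (c + 1))"
    using c_ge_1 by (intro mult_strict_left_mono) auto
  also have "\<dots> < 1" using c_ge_1 by simp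
  finally have "c * x powr (1 - a) * x powr a < 1 * x powr a"
    using x by (intro mult_strict_right_mono) auto
  then show ?thesis using x by (simp add: mult.assoc powr_add[symmetric])
qed

lemma deriv_majorant_less:
  assumes z: "0 < z" "z < threshold" shows "z * w1 z < \<iota> * w z"
proof -
  have "z * w1 z = a * T z - V z + c * z"
    unfolding w1_def using z by (simp add: distrib_left)
  moreover have "\<iota> * w z = 2 * (a * T z) + \<iota> * V z + \<iota> * (c * z)"
    unfolding majorant_def by (simp add: algebra_simps)
  moreover have "z powr a \<le> a * T z" using powr_le_tail_transform z threshold_le_1 by simp
  moreover have "c * z < z powr a" using linear_less_powr z by simp
  moreover have "0 \<le> \<iota> * V z" "0 \<le> \<iota> * (c * z)"
    using truncate_bounds[OF z(1)] \<iota>_pos c_ge_1 z by simp_all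
  ultimately show ?thesis using truncate_bounds[OF z(1)] by linarith
qed

lemma strict_antimono_on_majorant_ratio:
  "strict_antimono_on {0<..<threshold} (\<lambda>t. w t / t powr \<iota>)"
proof (rule monotone_onI)
  fix x y :: real assume x: "x \<in> {0<..<threshold}" and y: "y \<in> {0<..<threshold}" and xy: "x < y"
  define H where "H z = w z * z powr (-\<iota>)" for z
  have "H y < H x"
  proof (rule DERIV_neg_imp_decreasing[OF xy])
    fix z assume "x \<le> z" "z \<le> y"
    then have z: "0 < z" "z < threshold" using x y by auto
    have "(H has_real_derivative w1 z * z powr (-\<iota>) + w z * (-\<iota> * z powr (-\<iota> - 1))) (at z)"
      unfolding H_def[abs_def] using z
      by (auto intro!: derivative_eq_intros majorant_has_derivative)
    moreover have "w1 z * z powr (-\<iota>) + w z * (-\<iota> * z powr (-\<iota> - 1))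
        = z powr (-\<iota> - 1) * (z * w1 z - \<iota> * w z)"
      using z by (simp add: algebra_simps powr_diff)
    moreover have "z powr (-\<iota> - 1) * (z * w1 z - \<iota> * w z) < 0"
      using deriv_majorant_less[OF z] z by (simp add: mult_pos_neg)
    ultimately show "\<exists>d. (H has_real_derivative d) (at z) \<and> d < 0" by auto
  qed
  then show "w y / y powr \<iota> < w x / x powr \<iota>"
    using x y by (simp add: H_def powr_minus_divide)
qed

lemma good_modulus_majorant: "good_modulus \<iota> wb w"
  unfolding good_modulus_def
proof (intro conjI allI impI)
  show "continuous_on {0..} w" by (rule continuous_on_majorant)
  show "strict_mono_on {0..} w" by (rule strict_mono_on_majorant)
  show "concave_on {0..} w" by (rule concave_on_majorant)
  show "w t \<ge> 0" if "t \<ge> 0" for t using majorant_nonneg that by simp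
  show "w 0 = 0" by (rule majorant_0)
  show "w differentiable at t" if "0 < t" for t
    using majorant_has_derivative[OF that] real_differentiable_def by blast
  show "deriv w differentiable at t" if "0 < t" for t
    using deriv_majorant_has_derivative[OF that] real_differentiable_def by blast
  show "continuous_on {0<..} (deriv (deriv w))"
    using continuous_on_w2 by (rule continuous_on_cong[THEN iffD1, rotated 2]) (auto simp: deriv2_majorant)
  show "w t \<ge> wb t" if "t \<ge> 0" for t using majorant_ge that by simp
  show "\<exists>t0>0. strict_antimono_on {0<..<t0} (\<lambda>t. w t / t powr \<iota>) \<and>
        (\<forall>t. 0 < t \<and> t < t0 \<longrightarrow> t^2 * deriv (deriv w) t \<ge> - w t - 3 * t * deriv w t)"
    using threshold_pos strict_antimono_on_majorant_ratio majorant_differential_inequality by blast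
qed

section \<open>Dini conditions for the majorant\<close>

lemma set_integrable_gauge_truncate:
  assumes "dini_gauge \<Phi> k q"
    and modulus: "set_integrable lborel {0<..1} (\<lambda>t. \<Phi> (wb t) / t)"
    and identity: "set_integrable lborel {0<..1} (\<lambda>t. \<Phi> t / t)"
  shows "set_integrable lborel {0<..1} (\<lambda>t. \<Phi> (f t) / t)"
proof -
  interpret \<Phi>: dini_gauge \<Phi> k q by fact
  note wb = admissible_modulusD[OF admissible]
  show ?thesis
  proof (rule set_integrable_Ioc01_bound)
    show "continuous_on {0<..1} (\<lambda>t. \<Phi> (f t) / t)"
      by (rule \<Phi>.continuous_on_comp_divide[OF continuous_on_subset[OF cont]]) (auto intro: nonneg)
    show "set_integrable lborel {0<..1} (\<lambda>t. 2 * (\<Phi> (wb t) / t) + 2 * (\<Phi> t / t))"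
      using modulus identity by (intro set_integral_add set_integrable_mult_right)
    fix t :: real assume t: "0 < t" "t \<le> 1"
    have "\<Phi> (f t) \<le> 2 * (\<Phi> (wb t) + \<Phi> t)"
      using truncate_eq[of t] \<Phi>.add_le[of "wb t" t] wb(4)[of t] t by simp
    then show "\<bar>\<Phi> (f t) / t\<bar> \<le> 2 * (\<Phi> (wb t) / t) + 2 * (\<Phi> t / t)"
      using \<Phi>.nonneg[OF nonneg[of t]] t by (simp add: divide_right_mono add_divide_distrib[symmetric])
  qed
qed

lemma set_integrable_gauge_majorant:
  assumes gauge: "dini_gauge \<Phi> k q"
    and modulus: "set_integrable lborel {0<..1} (\<lambda>t. \<Phi> (wb t) / t)"
    and identity: "set_integrable lborel {0<..1} (\<lambda>t. \<Phi> t / t)"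
  shows "set_integrable lborel {0<..1} (\<lambda>t. \<Phi> (w t) / t)"
proof -
  interpret \<Phi>: dini_gauge \<Phi> k q by fact
  have truncate: "set_integrable lborel {0<..1} (\<lambda>t. \<Phi> (f t) / t)"
    by (rule set_integrable_gauge_truncate[OF gauge modulus identity])
  have tail: "set_integrable lborel {0<..1} (\<lambda>t. \<Phi> (T t) / t)"
    using \<Phi>.set_integrable_tail_transform[OF truncated_modulus_axioms _ truncate] a_less_1 by simp
  show ?thesis
  proof (rule set_integrable_Ioc01_bound)
    show "continuous_on {0<..1} (\<lambda>t. \<Phi> (w t) / t)"
      by (rule \<Phi>.continuous_on_comp_divide[OF continuous_on_subset[OF continuous_on_majorant]])
         (auto intro: majorant_nonneg)
    show "set_integrable lborel {0<..1}
        (\<lambda>t. 2 * (\<Phi> (T t) / t) + 4 * (\<Phi> (f t) / t) + (4 * c) * (\<Phi> t / t))"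
      using tail truncate identity by (intro set_integral_add set_integrable_mult_right)
    fix t :: real assume t: "0 < t" "t \<le> 1"
    note bounds = truncate_bounds[OF t(1)] tail_transform_nonneg[OF t(1)]
    have "\<Phi> (w t) \<le> \<Phi> (T t + (f t + c * t))"
      using bounds t c_ge_1 majorant_nonneg[of t] unfolding majorant_def by (intro \<Phi>.mono) auto
    also have "\<dots> \<le> 2 * (\<Phi> (T t) + 2 * (\<Phi> (f t) + \<Phi> (c * t)))"
      using \<Phi>.add_le[of "f t" "c * t"] \<Phi>.add_le[of "T t" "f t + c * t"] bounds t c_ge_1 by simp
    also have "\<Phi> (c * t) \<le> c * \<Phi> t" using c_ge_1 t by (intro \<Phi>.scale_upper) auto
    finally have "\<Phi> (w t) \<le> 2 * \<Phi> (T t) + 4 * \<Phi> (f t) + 4 * c * \<Phi> t" by simp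
    then show "\<bar>\<Phi> (w t) / t\<bar> \<le> 2 * (\<Phi> (T t) / t) + 4 * (\<Phi> (f t) / t) + (4 * c) * (\<Phi> t / t)"
      using \<Phi>.nonneg[OF majorant_nonneg[of t]] t
      by (simp add: divide_right_mono add_divide_distrib[symmetric])
  qed
qed


lemma majorant_pos: "0 < t \<Longrightarrow> 0 < w t"
  using majorant_ge_linear[of t] c_ge_1 by (smt (verit) mult_pos_pos)

lemma majorant_le_1: "0 < t \<Longrightarrow> t \<le> 1 \<Longrightarrow> w t \<le> w 1"
  using strict_mono_on_majorant unfolding monotone_on_def
  by (metis atLeast_iff less_eq_real_def zero_le_one less_imp_le)

lemma continuous_on_majorant_Ioc01: "continuous_on {0<..1} w"
  by (rule continuous_on_subset[OF continuous_on_majorant]) auto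

lemma continuous_on_majorant_integrand:
  "continuous_on {0<..1} (\<lambda>t. w t / t * ((w t powr e - w 1 powr e) / d))"
proof -
  have "continuous_on {0<..1} (\<lambda>t. w t powr e)"
    by (rule continuous_on_powr'[OF continuous_on_majorant_Ioc01 continuous_on_const])
       (use majorant_pos in \<open>fastforce\<close>)
  then have "continuous_on {0<..1} (\<lambda>t. w t / t * (1 / d) * (w t powr e - w 1 powr e))"
    by (intro continuous_on_mult continuous_on_divide continuous_on_diff continuous_on_majorant_Ioc01
        continuous_on_id continuous_on_const) auto
  then show ?thesis by (simp add: field_simps)
qed

lemma dini_majorant: assumes "dini wb" shows "dini w"
proof -
  have "set_integrable lborel {0<..1::real} (\<lambda>t. t / t)"
  proof (rule set_integrable_Ioc01_bound[OF _ set_integrable_Ioc01_const[of 1]])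
    show "continuous_on {0<..1::real} (\<lambda>t. t / t)"
      by (rule continuous_on_divide[OF continuous_on_id continuous_on_id]) auto
  qed simp
  then show ?thesis
    using set_integrable_gauge_majorant[OF dini_gauge_id] assms unfolding dini_def by simp
qed

lemma two_s_dini_majorant_less_half:
  assumes s: "0 < s" "s < 1/2" and dini: "two_s_dini s wb"
  shows "two_s_dini s w"
proof -
  define e where "e = 2 * s - 1"
  have e: "e < 0" "2 * s = 1 + e" "0 < 1 - 2 * s" unfolding e_def using s by auto
  have "set_integrable lborel {0<..1} (\<lambda>t. t powr (2 * s) / t)"
  proof (rule set_integrable_Ioc01_bound[OF _ set_integrable_Ioc01_powr[of "2 * s"]])
    show "continuous_on {0<..1::real} (\<lambda>t. t powr (2 * s) / t)"
      by (intro continuous_intros) auto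
  qed (use s in \<open>simp_all add: powr_diff\<close>)
  then have W: "set_integrable lborel {0<..1} (\<lambda>t. w t powr (2 * s) / t)"
    using set_integrable_gauge_majorant[OF dini_gauge_powr two_s_dini_imp_powr_dini[OF admissible s dini]] s
    by simp
  have "set_integrable lborel {0<..1} (\<lambda>t. w t / t * ((w t powr e - w 1 powr e) / (1 - 2 * s)))"
  proof (rule set_integrable_Ioc01_bound[OF _ set_integrable_mult_right[OF W, of "1 / (1 - 2 * s)"]])
    show "continuous_on {0<..1} (\<lambda>t. w t / t * ((w t powr e - w 1 powr e) / (1 - 2 * s)))"
      by (rule continuous_on_majorant_integrand)
    fix t :: real assume t: "0 < t" "t \<le> 1"
    have wt: "0 < w t" using majorant_pos t by simp
    have "w 1 powr e \<le> w t powr e" using powr_mono2'[of e "w t" "w 1"] e wt majorant_le_1[OF t] by simp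
    then have "0 \<le> w t / t * ((w t powr e - w 1 powr e) / (1 - 2 * s))"
      using wt t e(3) by (intro mult_nonneg_nonneg divide_nonneg_pos) auto
    moreover have "w t / t * ((w t powr e - w 1 powr e) / (1 - 2 * s)) \<le> w t / t * (w t powr e / (1 - 2 * s))"
      using wt t e by (intro mult_left_mono divide_right_mono) auto
    moreover have "w t / t * (w t powr e / (1 - 2 * s)) = 1 / (1 - 2 * s) * (w t powr (2 * s) / t)"
      using wt by (simp add: e powr_add)
    ultimately show "\<bar>w t / t * ((w t powr e - w 1 powr e) / (1 - 2 * s))\<bar>
        \<le> 1 / (1 - 2 * s) * (w t powr (2 * s) / t)" by (metis abs_of_nonneg)
  qed
  then show ?thesis using s unfolding two_s_dini_def e_def by simp
qed

lemma two_s_dini_majorant_greater_half: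
  assumes s: "1/2 < s" "s < 1" and dini: "two_s_dini s wb"
  shows "two_s_dini s w"
proof -
  have W: "set_integrable lborel {0<..1} (\<lambda>t. w t / t)"
    using dini_majorant[OF two_s_dini_imp_dini[OF admissible s dini]] unfolding dini_def .
  define e where "e = 2 * s - 1"
  have e: "0 < e" "1 - 2 * s = - e" unfolding e_def using s by auto
  have "set_integrable lborel {0<..1} (\<lambda>t. w t / t * ((w t powr e - w 1 powr e) / (1 - 2 * s)))"
  proof (rule set_integrable_Ioc01_bound[OF _ set_integrable_mult_right[OF W, of "w 1 powr e / e"]])
    show "continuous_on {0<..1} (\<lambda>t. w t / t * ((w t powr e - w 1 powr e) / (1 - 2 * s)))"
      by (rule continuous_on_majorant_integrand)
    fix t :: real assume t: "0 < t" "t \<le> 1"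
    have wt: "0 < w t" using majorant_pos t by simp
    have eq: "w t / t * ((w t powr e - w 1 powr e) / (1 - 2 * s)) = w t / t * ((w 1 powr e - w t powr e) / e)"
      unfolding e(2) by (metis minus_diff_eq minus_divide_left minus_divide_right)
    have "w t powr e \<le> w 1 powr e" using powr_mono2[of e "w t" "w 1"] e wt majorant_le_1[OF t] by simp
    then have "0 \<le> w t / t * ((w 1 powr e - w t powr e) / e)" using wt t e by simp
    moreover have "w t / t * ((w 1 powr e - w t powr e) / e) \<le> w t / t * (w 1 powr e / e)"
      using wt t e by (intro mult_left_mono divide_right_mono) auto
    moreover have "w t / t * (w 1 powr e / e) = w 1 powr e / e * (w t / t)" by (simp add: ac_simps)
    ultimately show "\<bar>w t / t * ((w t powr e - w 1 powr e) / (1 - 2 * s))\<bar> \<le> w 1 powr e / e * (w t / t)"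
      unfolding eq by (metis abs_of_nonneg)
  qed
  then show ?thesis using s unfolding two_s_dini_def e_def by simp
qed

lemma two_s_dini_majorant_half:
  assumes dini: "two_s_dini (1/2) wb"
  shows "two_s_dini (1/2) w"
proof -
  define M where "M = w 1"
  have M: "0 < M" unfolding M_def using majorant_pos by simp
  have W: "set_integrable lborel {0<..1} (\<lambda>t. log_gauge M (w t) / t)"
    using set_integrable_gauge_majorant[OF dini_gauge_log_gauge[OF M]
        two_s_dini_half_imp_log_gauge_dini[OF admissible dini M] set_integrable_log_gauge_divide[OF M]]
    by simp
  have "set_integrable lborel {0<..1} (\<lambda>t. w t / t * ln (w 1 / w t))"
  proof (rule set_integrable_Ioc01_bound[OF _ W])
    show "continuous_on {0<..1} (\<lambda>t. w t / t * ln (w 1 / w t))"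
      using continuous_on_majorant_Ioc01 majorant_pos[of 1] majorant_pos[THEN less_imp_neq]
      by (intro continuous_on_mult continuous_on_divide continuous_on_ln continuous_on_id continuous_on_const)
         (auto simp: divide_pos_pos majorant_pos)
    fix t :: real assume t: "0 < t" "t \<le> 1"
    have wt: "0 < w t" using majorant_pos t by simp
    have "0 \<le> ln (w 1 / w t)" using majorant_le_1[OF t] wt by simp
    moreover have "ln (w 1 / w t) \<le> 1 + log_plus M (w t)" unfolding log_plus_def M_def by simp
    then have "w t / t * ln (w 1 / w t) \<le> log_gauge M (w t) / t"
      using wt t unfolding log_gauge_def by (simp add: divide_right_mono mult_left_mono)
    ultimately show "\<bar>w t / t * ln (w 1 / w t)\<bar> \<le> log_gauge M (w t) / t" using wt t by simp
  qed
  then show ?thesis unfolding two_s_dini_def by simp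
qed

lemma two_s_dini_majorant:
  assumes "0 < s" "s < 1" "two_s_dini s wb" shows "two_s_dini s w"
proof (cases s "1/2 :: real" rule: linorder_cases)
  case less
  then show ?thesis using assms two_s_dini_majorant_less_half by blast
next
  case equal
  then show ?thesis using assms two_s_dini_majorant_half by blast
next
  case greater
  then show ?thesis using assms two_s_dini_majorant_greater_half by blast
qed

end

theorem lemma5p1:
  fixes \<iota> s :: real and wb :: "real \<Rightarrow> real"
  assumes "0 < \<iota>" "\<iota> < 1/3" "0 < s" "s < 1"
    and "admissible_modulus wb"
  shows "(dini wb \<longrightarrow> (\<exists>w. good_modulus \<iota> wb w \<and> dini w)) \<and>
         (two_s_dini s wb \<longrightarrow> (\<exists>w. good_modulus \<iota> wb w \<and> two_s_dini s w))"
proof -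
  obtain c where "1 \<le> c" "\<And>t. 1 \<le> t \<Longrightarrow> wb t \<le> c * t"
    using admissible_modulus_linear_bound[OF assms(5)] by blast
  then interpret majorant_construction wb \<iota> c
    using assms by unfold_locales auto
  show ?thesis
    using good_modulus_majorant dini_majorant two_s_dini_majorant assms(3,4) by blast
qed

end
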